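(* Let $\mathcal P$ and $\mathcal Q$ be down-right paths with $\mathcal Q$ above $\mathcal P$. (1) For every $\boldsymbol\lambda_1'\in\mathbb Z^{N+1}$, $$\sum_{\boldsymbol\lambda_1\in\mathbb Z^{N+1}}\mathrm U^{\mathcal P,\mathcal Q}(\boldsymbol\lambda_1'\,|\,\boldsymbol\lambda_1)\,\mathrm{wt}^{\mathcal P}(\boldsymbol\lambda_1)=\mathrm{wt}^{\mathcal Q}(\boldsymbol\lambda_1').$$ (2) Assume moreover $c_1c_2<1$. If $\mathbf L_1\in\mathbb Z^N$ has law $\mathrm P^{\mathcal P}$ and the LPP is started from $G(\mathbf p_0)=0$, $G(\mathbf p_j)=L_1(j)$ ($1\le j\le N$), then $(G(\mathbf q_j)-G(\mathbf q_0))_{1\le j\le N}$ has law $\mathrm P^{\mathcal Q}$; equivalently, for all $\mathbf L_1'\in\mathbb Z^N$, $\sum_{\mathbf L_1\in\mathbb Z^N}\mathbf U^{\mathcal P,\mathcal Q}(\mathbf L_1'|\mathbf L_1)\mathrm P^{\mathcal P}(\mathbf L_1)=\mathrm P^{\mathcal Q}(\mathbf L_1')$, where $\mathbf U^{\mathcal P,\mathcal Q}(\mathbf L_1'|\mathbf L_1)=\sum_{x\in\mathbb Z}\mathrm U^{\mathcal P,\mathcal Q}((x,\mathbf L_1'+x)\,|\,(0,\mathbf L_1))$.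
   Context: Fix $N\ge1$, $a_1,\dots,a_N,c_1,c_2>0$ with $a_ia_j<1$, $a_ic_1<1$, $a_ic_2<1$; extend $a_{j+kN}=a_j$. Strip $\{(n,m)\in\mathbb Z^2:0\le m\le n\le m+N\}$; independent weights $\omega_{n,m}\sim\mathrm{Geom}(a_na_m)$ on bulk vertices ($0\le m<n<m+N$), $\omega_{m,m}\sim\mathrm{Geom}(a_mc_1)$, $\omega_{m+N,m}\sim\mathrm{Geom}(a_mc_2)$, where $\mathrm{Geom}(q)$ has mass $(1-q)q^n$ on $\mathbb Z_{\ge0}$. A down-right path is a sequence of strip vertices $\mathbf p_0=(m_0,m_0),\mathbf p_1,\dots,\mathbf p_N$ with steps in $\{(1,0),(0,-1)\}$; edge $\mathsf e_j$ ($\mathbf p_{j-1}\to\mathbf p_j$) is labelled $\ell_j=a_n$ if horizontal $(n-1,m)\to(n,m)$ and $\ell_j=a_m$ if vertical between $(n,m-1)$ and $(n,m)$. A vertex is above $\mathcal P$ if it is reachable from a vertex of $\mathcal P$ by an up-right lattice path in the strip; $\mathcal Q$ (vertices $\mathbf q_j$) is above $\mathcal P$ if all its vertices lie on or above $\mathcal P$. Given initial values $G(\mathbf p_j)$, for $(n,m)$ above $\mathcal P$ set $G(n,m)=\max_\pi\big(G(\pi(0))+\sum_{i=1}^{\ell}\omega_{\pi(i)}\big)$, over up-right paths $\pi$ in the strip from $\pi(0)\in\mathcal P$ to $\pi(\ell)=(n,m)$ touching $\mathcal P$ only at $\pi(0)$. $\mathrm U^{\mathcal P,\mathcal Q}(\boldsymbol\lambda'|\boldsymbol\lambda)$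 is the probability that $G(\mathbf q_j)=\lambda'^{(j)}$ for all $0\le j\le N$ given $G(\mathbf p_j)=\lambda^{(j)}$ for all $j$. Two-layer weight: with $(\mathrm{up}(j),\mathrm{low}(j))=(j,j-1)$ if $\mathsf e_j$ horizontal and $(j-1,j)$ if vertical, for $\boldsymbol\lambda=(\boldsymbol\lambda_1,\boldsymbol\lambda_2)$, $\boldsymbol\lambda_i=(\lambda_i^{(0)},\dots,\lambda_i^{(N)})\in\mathbb Z^{N+1}$, $\mathrm{wt}^{\mathcal{GP}}(\boldsymbol\lambda)=c_1^{\lambda_1^{(0)}-\lambda_2^{(0)}}c_2^{\lambda_1^{(N)}-\lambda_2^{(N)}}\prod_{j=1}^N\big[\prod_{i=1}^2\ell_j^{\lambda_i^{(\mathrm{up}(j))}-\lambda_i^{(\mathrm{low}(j))}}\mathbf 1\{\lambda_i^{(\mathrm{up}(j))}\ge\lambda_i^{(\mathrm{low}(j))}\}\big]\mathbf 1\{\lambda_1^{(\mathrm{low}(j))}\ge\lambda_2^{(\mathrm{up}(j))}\}$, and $\mathrm{wt}^{\mathcal P}(\boldsymbol\lambda_1)=\sum_{\boldsymbol\lambda_2\in\mathbb Z^{N+1}}\mathrm{wt}^{\mathcal{GP}}(\boldsymbol\lambda_1,\boldsymbol\lambda_2)$ (sums of nonnegative terms). This is invariant under adding a constant to all coordinates of $\boldsymbol\lambda_1$. When $c_1c_2<1$, $Z=\sum_{\lambda_1^{(1)},\dots,\lambda_1^{(N)}}\mathrm{wt}^{\mathcal P}(\boldsymbol\lambda_1)$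 (with $\lambda_1^{(0)}$ fixed) is finite, positive and independent of $\mathcal P$ and $\lambda_1^{(0)}$, and $\mathrm P^{\mathcal P}(\mathbf L_1):=\mathrm{wt}^{\mathcal P}(\boldsymbol\lambda_1)/Z$, where $L_1(j)=\lambda_1^{(j)}-\lambda_1^{(0)}$, is a probability mass function on $\mathbb Z^N$. *)

theory Defs
  imports "HOL-Probability.Probability"
begin

(* Vertices are pairs (n,m) of integers.  Vectors in Z^{N+1} (indices 0..N) are
   represented as functions nat => int vanishing for indices > N. *)

type_synonym vertex = "int \<times> int"

definition in_strip :: "nat \<Rightarrow> vertex \<Rightarrow> bool" where
  "in_strip N v \<longleftrightarrow> 0 \<le> snd v \<and> snd v \<le> fst v \<and> fst v \<le> snd v + int N"

definition Zvec :: "nat \<Rightarrow> (nat \<Rightarrow> int) set" where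
  "Zvec N = {f. \<forall>j>N. f j = 0}"

(* vectors (0, L_1) with L_1 in Z^N *)
definition Lvec :: "nat \<Rightarrow> (nat \<Rightarrow> int) set" where
  "Lvec N = {f. f 0 = 0 \<and> (\<forall>j>N. f j = 0)}"

definition down_right :: "nat \<Rightarrow> (nat \<Rightarrow> vertex) \<Rightarrow> bool" where
  "down_right N P \<longleftrightarrow> fst (P 0) = snd (P 0) \<and> (\<forall>j\<le>N. in_strip N (P j)) \<and>
     (\<forall>j\<in>{1..N}. P j = (fst (P (j-1)) + 1, snd (P (j-1))) \<or>
                   P j = (fst (P (j-1)), snd (P (j-1)) - 1))"

definition horiz :: "(nat \<Rightarrow> vertex) \<Rightarrow> nat \<Rightarrow> bool" where
  "horiz P j \<longleftrightarrow> P j = (fst (P (j-1)) + 1, snd (P (j-1)))"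

definition lab :: "(int \<Rightarrow> real) \<Rightarrow> (nat \<Rightarrow> vertex) \<Rightarrow> nat \<Rightarrow> real" where
  "lab a P j = (if horiz P j then a (fst (P j)) else a (snd (P (j-1))))"

definition up :: "(nat \<Rightarrow> vertex) \<Rightarrow> nat \<Rightarrow> nat" where
  "up P j = (if horiz P j then j else j - 1)"

definition low :: "(nat \<Rightarrow> vertex) \<Rightarrow> nat \<Rightarrow> nat" where
  "low P j = (if horiz P j then j - 1 else j)"

definition ind :: "bool \<Rightarrow> real" where
  "ind b = (if b then 1 else 0)"

definition wtGP :: "nat \<Rightarrow> (int \<Rightarrow> real) \<Rightarrow> real \<Rightarrow> real \<Rightarrow> (nat \<Rightarrow> vertex)
                    \<Rightarrow> (nat \<Rightarrow> int) \<Rightarrow> (nat \<Rightarrow> int) \<Rightarrow> real" where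
  "wtGP N a c1 c2 P l1 l2 =
     c1 powi (l1 0 - l2 0) * c2 powi (l1 N - l2 N) *
     (\<Prod>j\<in>{1..N}.
        (lab a P j powi (l1 (up P j) - l1 (low P j)) * ind (l1 (up P j) \<ge> l1 (low P j))) *
        (lab a P j powi (l2 (up P j) - l2 (low P j)) * ind (l2 (up P j) \<ge> l2 (low P j))) *
        ind (l1 (low P j) \<ge> l2 (up P j)))"

definition wtP :: "nat \<Rightarrow> (int \<Rightarrow> real) \<Rightarrow> real \<Rightarrow> real \<Rightarrow> (nat \<Rightarrow> vertex)
                   \<Rightarrow> (nat \<Rightarrow> int) \<Rightarrow> ennreal" where
  "wtP N a c1 c2 P l1 = (\<Sum>\<^sub>\<infinity>l2\<in>Zvec N. ennreal (wtGP N a c1 c2 P l1 l2))"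

definition upright_chain :: "nat \<Rightarrow> vertex list \<Rightarrow> bool" where
  "upright_chain N xs \<longleftrightarrow> (\<forall>v\<in>set xs. in_strip N v) \<and>
     (\<forall>i. Suc i < length xs \<longrightarrow>
        xs ! Suc i = (fst (xs ! i) + 1, snd (xs ! i)) \<or> xs ! Suc i = (fst (xs ! i), snd (xs ! i) + 1))"

definition above :: "nat \<Rightarrow> (nat \<Rightarrow> vertex) \<Rightarrow> vertex \<Rightarrow> bool" where
  "above N P v \<longleftrightarrow> (\<exists>j\<le>N. \<exists>xs. upright_chain N (P j # xs) \<and> last (P j # xs) = v)"

definition path_above :: "nat \<Rightarrow> (nat \<Rightarrow> vertex) \<Rightarrow> (nat \<Rightarrow> vertex) \<Rightarrow> bool" where
  "path_above N P Q \<longleftrightarrow> (\<forall>j\<le>N. above N P (Q j))"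

definition lpp :: "nat \<Rightarrow> (nat \<Rightarrow> vertex) \<Rightarrow> (nat \<Rightarrow> int) \<Rightarrow> (vertex \<Rightarrow> nat) \<Rightarrow> vertex \<Rightarrow> int" where
  "lpp N P lam w v = Max {lam j + (\<Sum>u\<leftarrow>xs. int (w u)) | j xs.
       j \<le> N \<and> upright_chain N (P j # xs) \<and> last (P j # xs) = v \<and>
       (\<forall>u\<in>set xs. u \<notin> P ` {..N})}"

definition qpar :: "nat \<Rightarrow> (int \<Rightarrow> real) \<Rightarrow> real \<Rightarrow> real \<Rightarrow> vertex \<Rightarrow> real" where
  "qpar N a c1 c2 v = (if fst v = snd v then a (snd v) * c1
                       else if fst v = snd v + int N then a (snd v) * c2
                       else a (fst v) * a (snd v))"

(* Geom(q): mass (1-q) q^n on nat *)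
definition Geom :: "real \<Rightarrow> nat pmf" where
  "Geom q = geometric_pmf (1 - q)"

(* finite region of strip vertices that can influence G on Q (all vertices
   coordinatewise below some q_j); weights there are independent *)
definition region :: "nat \<Rightarrow> (nat \<Rightarrow> vertex) \<Rightarrow> vertex set" where
  "region N Q = {v. in_strip N v \<and> (\<exists>j\<le>N. fst v \<le> fst (Q j) \<and> snd v \<le> snd (Q j))}"

definition weights :: "nat \<Rightarrow> (int \<Rightarrow> real) \<Rightarrow> real \<Rightarrow> real \<Rightarrow> (nat \<Rightarrow> vertex) \<Rightarrow> (vertex \<Rightarrow> nat) pmf" where
  "weights N a c1 c2 Q = Pi_pmf (region N Q) 0 (\<lambda>v. Geom (qpar N a c1 c2 v))"

definition U :: "nat \<Rightarrow> (int \<Rightarrow> real) \<Rightarrow> real \<Rightarrow> real \<Rightarrow> (nat \<Rightarrow> vertex) \<Rightarrow> (nat \<Rightarrow> vertex)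
                 \<Rightarrow> (nat \<Rightarrow> int) \<Rightarrow> (nat \<Rightarrow> int) \<Rightarrow> real" where
  "U N a c1 c2 P Q lam' lam =
     measure_pmf.prob (weights N a c1 c2 Q) {w. \<forall>j\<le>N. lpp N P lam w (Q j) = lam' j}"

definition Zc :: "nat \<Rightarrow> (int \<Rightarrow> real) \<Rightarrow> real \<Rightarrow> real \<Rightarrow> (nat \<Rightarrow> vertex) \<Rightarrow> ennreal" where
  "Zc N a c1 c2 P = (\<Sum>\<^sub>\<infinity>L\<in>Lvec N. wtP N a c1 c2 P L)"

(* P^P(L_1), with L_1 encoded as the vector (0, L_1) *)
definition PP :: "nat \<Rightarrow> (int \<Rightarrow> real) \<Rightarrow> real \<Rightarrow> real \<Rightarrow> (nat \<Rightarrow> vertex) \<Rightarrow> (nat \<Rightarrow> int) \<Rightarrow> ennreal" where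
  "PP N a c1 c2 P L = wtP N a c1 c2 P L / Zc N a c1 c2 P"

definition Ub :: "nat \<Rightarrow> (int \<Rightarrow> real) \<Rightarrow> real \<Rightarrow> real \<Rightarrow> (nat \<Rightarrow> vertex) \<Rightarrow> (nat \<Rightarrow> vertex)
                  \<Rightarrow> (nat \<Rightarrow> int) \<Rightarrow> (nat \<Rightarrow> int) \<Rightarrow> ennreal" where
  "Ub N a c1 c2 P Q L' L =
     (\<Sum>\<^sub>\<infinity>x\<in>(UNIV::int set). ennreal (U N a c1 c2 P Q (\<lambda>j. if j \<le> N then L' j + x else 0) L))"

end

theory Submission
  imports Defs
begin

text \<open>Encode a down-right path by its heights. Every path \<open>\<Q>\<close> above \<open>\<P>\<close> is reached from
  \<open>\<P>\<close> by pushing single vertices up across corners, one box at a time, staying between the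
  two paths. When vertex \<open>j\<close> is pushed, its new last passage value is the larger of the values
  at its two predecessors on the old path plus a fresh geometric weight which the old values do
  not see. So the transition kernel is built from one-coordinate geometric convolutions, and (1)
  reduces to a local identity for the factors of the two-layer weight next to coordinate \<open>j\<close>:
  after summing a geometric series both sides become the same finite sum up to a reflection of
  the summation variable. For (2), \<open>U\<close> and \<open>wt\<close> are invariant under adding a constant to all
  coordinates and \<open>U\<close> is a Markov kernel, so (1) also identifies the normalising constants.\<close>

section \<open>Sums of nonnegative extended reals\<close>

lemma infsum_ennreal_eq_nn_integral:
  fixes f :: "'a \<Rightarrow> ennreal"
  assumes "countable A"
  shows "infsum f A = (\<integral>\<^sup>+x. f x \<partial>count_space A)"
proof (rule antisym)
  show "infsum f A \<le> (\<integral>\<^sup>+x. f x \<partial>count_space A)"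
    unfolding nonneg_infsum_complete[OF zero_le]
  proof (rule SUP_least)
    fix F assume F: "F \<in> {F. finite F \<and> F \<subseteq> A}"
    have "sum f F = (\<integral>\<^sup>+x. f x \<partial>count_space F)"
      using F by (simp add: nn_integral_count_space_finite)
    also have "\<dots> \<le> (\<integral>\<^sup>+x. f x \<partial>count_space A)"
      using F by (auto simp: nn_integral_count_space_indicator intro!: nn_integral_mono split: split_indicator)
    finally show "sum f F \<le> (\<integral>\<^sup>+x. f x \<partial>count_space A)" .
  qed
next
  show "(\<integral>\<^sup>+x. f x \<partial>count_space A) \<le> infsum f A"
  proof (cases "finite A")
    case True
    then show ?thesis by (simp add: nn_integral_count_space_finite)
  next
    case False
    note enum = bij_betw_from_nat_into[OF assms False]
    have "(\<integral>\<^sup>+x. f x \<partial>count_space A) = (\<Sum>n. f (from_nat_into A n))"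
      by (simp add: nn_integral_bij_count_space[symmetric, OF enum] nn_integral_count_space_nat)
    also have "\<dots> = (SUP n. \<Sum>i<n. f (from_nat_into A i))"
      by (simp add: suminf_eq_SUP)
    also have "\<dots> \<le> infsum f A"
    proof (rule SUP_least)
      fix n
      have "inj_on (from_nat_into A) {..<n}"
        using enum by (meson bij_betw_def inj_on_subset subset_UNIV)
      then have "(\<Sum>i<n. f (from_nat_into A i)) = sum f (from_nat_into A ` {..<n})"
        by (simp add: sum.reindex)
      also have "\<dots> \<le> infsum f A"
        unfolding nonneg_infsum_complete[OF zero_le]
        by (rule SUP_upper) (use enum in \<open>auto simp: bij_betw_def\<close>)
      finally show "(\<Sum>i<n. f (from_nat_into A i)) \<le> infsum f A" .
    qed
    finally show ?thesis .
  qed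
qed

lemma infsum_swap_ennreal:
  fixes f :: "'a \<Rightarrow> 'b \<Rightarrow> ennreal"
  assumes "countable A" "countable B"
  shows "(\<Sum>\<^sub>\<infinity>x\<in>A. \<Sum>\<^sub>\<infinity>y\<in>B. f x y) = (\<Sum>\<^sub>\<infinity>y\<in>B. \<Sum>\<^sub>\<infinity>x\<in>A. f x y)"
  unfolding infsum_ennreal_eq_nn_integral[OF assms(1)] infsum_ennreal_eq_nn_integral[OF assms(2)]
  by (rule nn_integral_count_space_nn_integral[OF assms(2)]) simp

lemma nn_integral_infsum_swap:
  fixes f :: "'a \<Rightarrow> 'b \<Rightarrow> ennreal"
  assumes "countable A"
  shows "(\<integral>\<^sup>+y. (\<Sum>\<^sub>\<infinity>x\<in>A. f x y) \<partial>measure_pmf p) = (\<Sum>\<^sub>\<infinity>x\<in>A. \<integral>\<^sup>+y. f x y \<partial>measure_pmf p)"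
  unfolding infsum_ennreal_eq_nn_integral[OF assms]
  by (rule nn_integral_count_space_nn_integral[OF assms]) simp

lemma infsum_cmult_right_ennreal:
  fixes f :: "'a \<Rightarrow> ennreal"
  assumes "countable A"
  shows "(\<Sum>\<^sub>\<infinity>x\<in>A. c * f x) = c * (\<Sum>\<^sub>\<infinity>x\<in>A. f x)"
  unfolding infsum_ennreal_eq_nn_integral[OF assms]
  by (rule nn_integral_cmult) simp

lemma infsum_cmult_left_ennreal:
  fixes f :: "'a \<Rightarrow> ennreal"
  assumes "countable A"
  shows "(\<Sum>\<^sub>\<infinity>x\<in>A. f x * c) = (\<Sum>\<^sub>\<infinity>x\<in>A. f x) * c"
  using infsum_cmult_right_ennreal[OF assms, of c f] by (simp add: mult.commute)

lemma infsum_Sigma_ennreal: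
  fixes f :: "'a \<times> 'b \<Rightarrow> ennreal"
  assumes "countable A" "countable B"
  shows "(\<Sum>\<^sub>\<infinity>z\<in>A \<times> B. f z) = (\<Sum>\<^sub>\<infinity>x\<in>A. \<Sum>\<^sub>\<infinity>y\<in>B. f (x, y))"
proof -
  interpret sigma_finite_measure "count_space B"
    using assms(2) by (rule sigma_finite_measure_count_space_countable)
  have "(\<Sum>\<^sub>\<infinity>z\<in>A \<times> B. f z) = (\<integral>\<^sup>+z. f z \<partial>(count_space A \<Otimes>\<^sub>M count_space B))"
    using assms by (simp add: infsum_ennreal_eq_nn_integral pair_measure_countable)
  also have "\<dots> = (\<integral>\<^sup>+x. \<integral>\<^sup>+y. f (x, y) \<partial>count_space B \<partial>count_space A)"
    by (rule nn_integral_fst[symmetric]) (simp add: pair_measure_countable[OF assms])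
  finally show ?thesis
    unfolding infsum_ennreal_eq_nn_integral[OF assms(1)] infsum_ennreal_eq_nn_integral[OF assms(2)] .
qed

lemma infsum_eq_single:
  fixes f :: "'a \<Rightarrow> 'b::{comm_monoid_add,t2_space}"
  assumes "a \<in> A" "\<And>x. x \<in> A \<Longrightarrow> x \<noteq> a \<Longrightarrow> f x = 0"
  shows "infsum f A = f a"
proof -
  have "infsum f A = infsum f {a}"
    by (rule infsum_cong_neutral) (use assms in auto)
  then show ?thesis by simp
qed

lemma infsum_int_uminus_ennreal:
  fixes g :: "int \<Rightarrow> ennreal"
  shows "(\<Sum>\<^sub>\<infinity>x\<in>UNIV. g (- x)) = (\<Sum>\<^sub>\<infinity>x\<in>UNIV. g x)"
  using infsum_reindex_bij_betw[of uminus UNIV UNIV g] by (simp add: bij_uminus)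

section \<open>Down-right paths as height functions\<close>

text \<open>The \<open>j\<close>-th vertex of a down-right path lies on the diagonal \<open>n - m = j\<close>, so the path
  is determined by its heights \<open>m\<close>.\<close>

definition path_of :: "(nat \<Rightarrow> int) \<Rightarrow> nat \<Rightarrow> vertex" where
  "path_of h j = (h j + int j, h j)"

definition admissible :: "nat \<Rightarrow> (nat \<Rightarrow> int) \<Rightarrow> bool" where
  "admissible N h \<longleftrightarrow> (\<forall>j\<le>N. 0 \<le> h j) \<and> (\<forall>j\<in>{1..N}. h j = h (j-1) \<or> h j = h (j-1) - 1)"

lemma path_of_inj: "path_of h i = path_of h' k \<Longrightarrow> i = k"
  unfolding path_of_def by auto

lemma down_right_eq_path_of:
  assumes "down_right N P" "j \<le> N"
  shows "P j = path_of (\<lambda>i. snd (P i)) j"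
  using assms(2)
proof (induction j)
  case 0
  then show ?case using assms(1) unfolding down_right_def path_of_def
    by (metis add.right_neutral of_nat_0 prod.collapse)
next
  case (Suc j)
  then have IH: "fst (P j) = snd (P j) + int j" unfolding path_of_def by (metis Suc_leD fst_conv)
  have "P (Suc j) = (fst (P j) + 1, snd (P j)) \<or> P (Suc j) = (fst (P j), snd (P j) - 1)"
    using assms(1) Suc.prems unfolding down_right_def by (metis atLeastAtMost_iff diff_Suc_1 le_add1 plus_1_eq_Suc)
  then show ?case using IH unfolding path_of_def by auto
qed

lemma down_right_inj:
  assumes "down_right N P" "i \<le> N" "k \<le> N" "P i = P k"
  shows "i = k"
  using assms down_right_eq_path_of path_of_inj by metis

lemma down_right_in_strip: "down_right N P \<Longrightarrow> i \<le> N \<Longrightarrow> in_strip N (P i)"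
  unfolding down_right_def by blast

lemma admissible_heights:
  assumes "down_right N P"
  shows "admissible N (\<lambda>i. snd (P i))"
  unfolding admissible_def
proof (intro conjI ballI allI impI)
  fix j assume "j \<le> N"
  then show "0 \<le> snd (P j)" using down_right_in_strip[OF assms] unfolding in_strip_def by simp
next
  fix j assume "j \<in> {1..N}"
  then have "P j = (fst (P (j-1)) + 1, snd (P (j-1))) \<or> P j = (fst (P (j-1)), snd (P (j-1)) - 1)"
    using assms unfolding down_right_def by auto
  then show "snd (P j) = snd (P (j - 1)) \<or> snd (P j) = snd (P (j - 1)) - 1" by auto
qed

lemma horiz_path_of: "1 \<le> j \<Longrightarrow> horiz (path_of h) j \<longleftrightarrow> h j = h (j-1)"
  unfolding horiz_def path_of_def by (auto simp: of_nat_diff)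

lemma admissible_step: "admissible N h \<Longrightarrow> i \<in> {1..N} \<Longrightarrow> h i = h (i-1) \<or> h i = h (i-1) - 1"
  unfolding admissible_def by blast

lemma admissible_nonneg: "admissible N h \<Longrightarrow> i \<le> N \<Longrightarrow> 0 \<le> h i"
  unfolding admissible_def by blast

lemma admissible_decreasing:
  assumes "admissible N h" "i \<le> k" "k \<le> N"
  shows "h k \<le> h i \<and> h i \<le> h k + int (k - i)"
  using assms(2,3)
proof (induction k)
  case (Suc k)
  show ?case
  proof (cases "i = Suc k")
    case False
    then have "h k \<le> h i \<and> h i \<le> h k + int (k - i)" "int (Suc k - i) = int (k - i) + 1"
      using Suc by auto
    moreover have "h (Suc k) = h k \<or> h (Suc k) = h k - 1"
      using admissible_step[OF assms(1), of "Suc k"] Suc.prems by simp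
    ultimately show ?thesis by auto
  qed simp
qed simp

lemma upright_chain_last_ge:
  assumes "upright_chain N (x # xs)"
  shows "fst x \<le> fst (last (x # xs)) \<and> snd x \<le> snd (last (x # xs))"
proof -
  have "fst x \<le> fst ((x # xs) ! n) \<and> snd x \<le> snd ((x # xs) ! n)" if "n < length (x # xs)" for n
    using that
  proof (induction n)
    case (Suc n)
    have "(x # xs) ! Suc n = (fst ((x # xs) ! n) + 1, snd ((x # xs) ! n)) \<or>
          (x # xs) ! Suc n = (fst ((x # xs) ! n), snd ((x # xs) ! n) + 1)"
      using assms Suc.prems unfolding upright_chain_def by blast
    then show ?case using Suc by auto
  qed simp
  moreover have "last (x # xs) = (x # xs) ! length xs" by (simp add: last_conv_nth)
  ultimately show ?thesis by simp
qed

lemma path_above_heights: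
  assumes P: "down_right N P" and Q: "down_right N Q" and "path_above N P Q" and j: "j \<le> N"
  shows "snd (P j) \<le> snd (Q j)"
proof -
  obtain i xs where i: "i \<le> N" and c: "upright_chain N (P i # xs)" and l: "last (P i # xs) = Q j"
    using assms(3) j unfolding path_above_def above_def by blast
  have "fst (P i) \<le> fst (Q j)" "snd (P i) \<le> snd (Q j)" using upright_chain_last_ge[OF c] l by auto
  moreover have "fst (P i) = snd (P i) + int i" "fst (Q j) = snd (Q j) + int j"
    using down_right_eq_path_of[OF P i] down_right_eq_path_of[OF Q j] unfolding path_of_def
    by (metis fst_conv)+
  moreover have "i \<le> j \<Longrightarrow> snd (P j) \<le> snd (P i)" "j \<le> i \<Longrightarrow> snd (P j) \<le> snd (P i) + int (i - j)"
    using admissible_decreasing[OF admissible_heights[OF P]] i j by auto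
  ultimately show ?thesis by (cases "i \<le> j") auto
qed

section \<open>Last passage values\<close>

definition passage_values :: "nat \<Rightarrow> (nat \<Rightarrow> vertex) \<Rightarrow> (nat \<Rightarrow> int) \<Rightarrow> (vertex \<Rightarrow> nat) \<Rightarrow> vertex \<Rightarrow> int set" where
  "passage_values N P lam w v = {lam j + (\<Sum>u\<leftarrow>xs. int (w u)) | j xs.
       j \<le> N \<and> upright_chain N (P j # xs) \<and> last (P j # xs) = v \<and>
       (\<forall>u\<in>set xs. u \<notin> P ` {..N})}"

lemma lpp_eq_Max: "lpp N P lam w v = Max (passage_values N P lam w v)"
  unfolding lpp_def passage_values_def ..

definition lattice_step :: "vertex \<Rightarrow> vertex \<Rightarrow> bool" where
  "lattice_step u v \<longleftrightarrow> v = (fst u + 1, snd u) \<or> v = (fst u, snd u + 1)"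

lemma upright_chain_snoc:
  assumes "ys \<noteq> []"
  shows "upright_chain N (ys @ [v]) \<longleftrightarrow> upright_chain N ys \<and> in_strip N v \<and> lattice_step (last ys) v"
proof -
  obtain k where k: "length ys = Suc k" using assms by (cases ys) auto
  have last: "last ys = (ys @ [v]) ! k" using k assms by (simp add: nth_append last_conv_nth)
  have "(\<forall>i. Suc i < length (ys @ [v]) \<longrightarrow> lattice_step ((ys @ [v]) ! i) ((ys @ [v]) ! Suc i)) \<longleftrightarrow>
        (\<forall>i. Suc i < length ys \<longrightarrow> lattice_step (ys ! i) (ys ! Suc i)) \<and> lattice_step (last ys) v"
    (is "?l \<longleftrightarrow> ?r")
  proof
    assume l: ?l
    have "lattice_step (ys ! i) (ys ! Suc i)" if "Suc i < length ys" for i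
      using l[rule_format, of i] that by (simp add: nth_append)
    moreover have "lattice_step (last ys) v"
      using l[rule_format, of k] k unfolding last by (simp add: nth_append)
    ultimately show ?r by blast
  next
    assume r: ?r
    show ?l
    proof (intro allI impI)
      fix i assume "Suc i < length (ys @ [v])"
      then consider "Suc i < length ys" | "i = k" using k by (auto simp: less_Suc_eq)
      then show "lattice_step ((ys @ [v]) ! i) ((ys @ [v]) ! Suc i)"
        by cases (use r k last in \<open>simp_all add: nth_append\<close>)
    qed
  qed
  then show ?thesis unfolding upright_chain_def lattice_step_def by auto
qed

lemma upright_chain_single: "upright_chain N [x] \<longleftrightarrow> in_strip N x"
  unfolding upright_chain_def by auto

lemma passage_values_outside_strip:
  assumes "\<not> in_strip N v"
  shows "passage_values N P lam w v = {}"
proof -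
  have "in_strip N v" if "upright_chain N (P j # xs)" "last (P j # xs) = v" for j xs
    using that last_in_set[of "P j # xs"] unfolding upright_chain_def by auto
  then show ?thesis using assms unfolding passage_values_def by blast
qed

lemma passage_values_on_path:
  assumes "down_right N P" "k \<le> N"
  shows "passage_values N P lam w (P k) = {lam k}"
proof
  show "{lam k} \<subseteq> passage_values N P lam w (P k)"
    unfolding passage_values_def using assms down_right_in_strip
    by (auto intro!: exI[of _ k] exI[of _ "[]"] simp: upright_chain_single)
next
  show "passage_values N P lam w (P k) \<subseteq> {lam k}"
  proof
    fix s assume "s \<in> passage_values N P lam w (P k)"
    then obtain j xs where s: "s = lam j + (\<Sum>u\<leftarrow>xs. int (w u))" and j: "j \<le> N"
      and l: "last (P j # xs) = P k" and avoid: "\<forall>u\<in>set xs. u \<notin> P ` {..N}"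
      unfolding passage_values_def by blast
    have "xs = []"
      using l avoid assms(2) by (metis atMost_iff image_eqI last_ConsR last_in_set)
    then show "s \<in> {lam k}" using s l down_right_inj[OF assms(1) j assms(2)] by simp
  qed
qed

lemma passage_values_step:
  assumes v: "in_strip N v" "v \<notin> P ` {..N}"
  shows "passage_values N P lam w v = (\<lambda>s. s + int (w v)) `
           (passage_values N P lam w (fst v - 1, snd v) \<union> passage_values N P lam w (fst v, snd v - 1))"
proof
  show "passage_values N P lam w v \<subseteq> (\<lambda>s. s + int (w v)) `
           (passage_values N P lam w (fst v - 1, snd v) \<union> passage_values N P lam w (fst v, snd v - 1))"
  proof
    fix s assume "s \<in> passage_values N P lam w v"
    then obtain j xs where s: "s = lam j + (\<Sum>u\<leftarrow>xs. int (w u))" and j: "j \<le> N"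
      and c: "upright_chain N (P j # xs)" and l: "last (P j # xs) = v"
      and avoid: "\<forall>u\<in>set xs. u \<notin> P ` {..N}"
      unfolding passage_values_def by blast
    have "xs \<noteq> []" using l v j by auto
    then obtain ys where ys: "xs = ys @ [v]" using l by (metis append_butlast_last_id last_ConsR)
    then have c': "upright_chain N (P j # ys)" and st: "lattice_step (last (P j # ys)) v"
      using c upright_chain_snoc[of "P j # ys"] by auto
    have "lam j + (\<Sum>u\<leftarrow>ys. int (w u)) \<in> passage_values N P lam w (last (P j # ys))"
      unfolding passage_values_def using j c' avoid ys by auto
    moreover have "last (P j # ys) = (fst v - 1, snd v) \<or> last (P j # ys) = (fst v, snd v - 1)"
      using st unfolding lattice_step_def by auto
    ultimately show "s \<in> (\<lambda>s. s + int (w v)) ` (passage_values N P lam w (fst v - 1, snd v) \<union>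
                                               passage_values N P lam w (fst v, snd v - 1))"
      using s ys by force
  qed
next
  show "(\<lambda>s. s + int (w v)) ` (passage_values N P lam w (fst v - 1, snd v) \<union>
          passage_values N P lam w (fst v, snd v - 1)) \<subseteq> passage_values N P lam w v"
  proof
    fix s assume "s \<in> (\<lambda>s. s + int (w v)) ` (passage_values N P lam w (fst v - 1, snd v) \<union>
                                              passage_values N P lam w (fst v, snd v - 1))"
    then obtain j ys where s: "s = lam j + (\<Sum>u\<leftarrow>ys @ [v]. int (w u))" and j: "j \<le> N"
      and c: "upright_chain N (P j # ys)" and avoid: "\<forall>u\<in>set ys. u \<notin> P ` {..N}"
      and l: "last (P j # ys) = (fst v - 1, snd v) \<or> last (P j # ys) = (fst v, snd v - 1)"
      unfolding passage_values_def by auto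
    have "upright_chain N ((P j # ys) @ [v])"
      using upright_chain_snoc[of "P j # ys"] c v l unfolding lattice_step_def by auto
    then show "s \<in> passage_values N P lam w v"
      unfolding passage_values_def using s j avoid v
      by (intro CollectI exI[of _ j] exI[of _ "ys @ [v]"]) auto
  qed
qed

lemma finite_passage_values:
  assumes P: "down_right N P"
  shows "finite (passage_values N P lam w v)"
proof (induction "nat (fst v + snd v)" arbitrary: v rule: less_induct)
  case less
  show ?case
  proof (cases "in_strip N v \<and> v \<notin> P ` {..N}")
    case True
    have "finite (passage_values N P lam w u)"
      if "u = (fst v - 1, snd v) \<or> u = (fst v, snd v - 1)" for u
    proof (cases "in_strip N u")
      case True
      then have "nat (fst u + snd u) < nat (fst v + snd v)"
        using that unfolding in_strip_def by (auto simp: nat_less_eq_zless)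
      then show ?thesis using less by blast
    qed (simp add: passage_values_outside_strip)
    then show ?thesis using passage_values_step[of N v P lam w] True by simp
  next
    case False
    then consider "\<not> in_strip N v" | k where "k \<le> N" "v = P k" by blast
    then show ?thesis
      by cases (simp_all add: passage_values_outside_strip passage_values_on_path[OF P])
  qed
qed

lemma lpp_step:
  assumes P: "down_right N P" and v: "in_strip N v" "v \<notin> P ` {..N}"
    and ne: "passage_values N P lam w (fst v - 1, snd v) \<union> passage_values N P lam w (fst v, snd v - 1) \<noteq> {}"
  shows "lpp N P lam w v = Max (passage_values N P lam w (fst v - 1, snd v) \<union>
                                passage_values N P lam w (fst v, snd v - 1)) + int (w v)"
  unfolding lpp_eq_Max passage_values_step[OF v]
  by (rule mono_Max_commute[symmetric]) (use ne finite_passage_values[OF P] in \<open>auto simp: mono_def\<close>)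

lemma passage_values_eq_image:
  "passage_values N P lam w v = (\<lambda>(j, xs). lam j + (\<Sum>u\<leftarrow>xs. int (w u))) `
     {(j, xs). j \<le> N \<and> upright_chain N (P j # xs) \<and> last (P j # xs) = v \<and> (\<forall>u\<in>set xs. u \<notin> P ` {..N})}"
  unfolding passage_values_def by fast

lemma lpp_shift:
  assumes P: "down_right N P" and shift: "\<And>i. i \<le> N \<Longrightarrow> lam' i = lam i + c"
    and ne: "passage_values N P lam w v \<noteq> {}"
  shows "lpp N P lam' w v = lpp N P lam w v + c"
proof -
  have "passage_values N P lam' w v = (\<lambda>s. s + c) ` passage_values N P lam w v"
    unfolding passage_values_eq_image image_image using shift by (intro image_cong) auto
  then show ?thesis
    unfolding lpp_eq_Max
    by (metis mono_Max_commute[OF _ finite_passage_values[OF P] ne] add_right_mono monoI)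
qed

section \<open>Adding one independent weight\<close>

definition pmf_int :: "nat pmf \<Rightarrow> int \<Rightarrow> ennreal" where
  "pmf_int p d = (if 0 \<le> d then ennreal (pmf p (nat d)) else 0)"

lemma nn_integral_indicator_int_eq: "(\<integral>\<^sup>+y. indicator {y. int y = d} y \<partial>measure_pmf p) = pmf_int p d"
proof (cases "0 \<le> d")
  case True
  then have "{y. int y = d} = {nat d}" by auto
  then show ?thesis using True by (simp add: pmf_int_def emeasure_pmf_single)
qed (simp add: pmf_int_def)

lemma emeasure_Pi_pmf_remove:
  fixes p :: "'v \<Rightarrow> nat pmf"
  assumes "finite R" "v \<in> R"
  shows "emeasure (measure_pmf (Pi_pmf R 0 p)) E =
    (\<integral>\<^sup>+y. \<integral>\<^sup>+f. indicator E (f(v := y)) \<partial>measure_pmf (Pi_pmf (R - {v}) 0 p) \<partial>measure_pmf (p v))"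
proof -
  let ?upd = "\<lambda>(y,f). f(v:=y)"
  have "Pi_pmf R 0 p = map_pmf ?upd (pair_pmf (p v) (Pi_pmf (R - {v}) 0 p))"
    using Pi_pmf_insert[of "R - {v}" v 0 p] assms by (simp add: insert_absorb)
  then have "emeasure (measure_pmf (Pi_pmf R 0 p)) E =
      (\<integral>\<^sup>+x. indicator E x \<partial>measure_pmf (map_pmf ?upd (pair_pmf (p v) (Pi_pmf (R - {v}) 0 p))))"
    by (metis nn_integral_indicator sets_measure_pmf UNIV_I)
  also have "\<dots> = (\<integral>\<^sup>+z. indicator E (?upd z) \<partial>measure_pmf (pair_pmf (p v) (Pi_pmf (R - {v}) 0 p)))"
    by (rule nn_integral_map_pmf)
  finally show ?thesis
    by (simp add: nn_integral_pair_pmf')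
qed

lemma fun_upd_eq_iff_update: "f(j := c) = g \<longleftrightarrow> f = g(j := f j) \<and> c = g j"
  unfolding fun_eq_iff by auto

text \<open>If \<open>\<Phi>\<close> does not look at the weight \<open>w v\<close>, then replacing coordinate \<open>j\<close> of \<open>\<Phi> w\<close> by
  \<open>F (\<Phi> w) + w v\<close> convolves the law of \<open>\<Phi> w\<close> with the law of \<open>w v\<close> in that coordinate.\<close>

lemma emeasure_Pi_pmf_add_coordinate:
  fixes p :: "'v \<Rightarrow> nat pmf" and \<Phi> :: "('v \<Rightarrow> nat) \<Rightarrow> nat \<Rightarrow> int" and F :: "(nat \<Rightarrow> int) \<Rightarrow> int"
  assumes R: "finite R" "v \<in> R" and indep: "\<And>w t. \<Phi> (w(v := t)) = \<Phi> w"
  shows "emeasure (measure_pmf (Pi_pmf R 0 p)) {w. (\<Phi> w)(j := F (\<Phi> w) + int (w v)) = \<mu>} =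
     (\<Sum>\<^sub>\<infinity>x\<in>UNIV. emeasure (measure_pmf (Pi_pmf R 0 p)) {w. \<Phi> w = \<mu>(j := x)} * pmf_int (p v) (\<mu> j - F (\<mu>(j := x))))"
proof -
  let ?M = "measure_pmf (Pi_pmf (R - {v}) 0 p)" and ?E = "\<lambda>x. {u. \<Phi> u = \<mu>(j := x)}"
  let ?D = "\<lambda>x. {y. int y = \<mu> j - F (\<mu>(j := x))}"
  have split: "indicator {w. (\<Phi> w)(j := F (\<Phi> w) + int (w v)) = \<mu>} (f(v := y)) =
        (\<Sum>\<^sub>\<infinity>x\<in>UNIV. indicator (?E x) f * (indicator (?D x) y :: ennreal))" for f y
  proof -
    have "(\<Sum>\<^sub>\<infinity>x\<in>UNIV. indicator (?E x) f * (indicator (?D x) y :: ennreal)) =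
          indicator (?E (\<Phi> f j)) f * indicator (?D (\<Phi> f j)) y"
      by (rule infsum_eq_single) (auto simp: indicator_def dest: fun_cong[where x=j])
    also have "\<dots> = indicator {w. (\<Phi> w)(j := F (\<Phi> w) + int (w v)) = \<mu>} (f(v := y))"
      using fun_upd_eq_iff_update[of "\<Phi> f" j "F (\<Phi> f) + int y" \<mu>] by (auto simp: indicator_def indep)
    finally show ?thesis ..
  qed
  have marginal: "emeasure (measure_pmf (Pi_pmf R 0 p)) (?E x) = (\<integral>\<^sup>+f. indicator (?E x) f \<partial>?M)" for x
    unfolding emeasure_Pi_pmf_remove[OF R] by (simp add: indep measure_pmf.emeasure_space_1 indicator_def)
  have "emeasure (measure_pmf (Pi_pmf R 0 p)) {w. (\<Phi> w)(j := F (\<Phi> w) + int (w v)) = \<mu>} =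
      (\<integral>\<^sup>+y. \<integral>\<^sup>+f. (\<Sum>\<^sub>\<infinity>x\<in>UNIV. indicator (?E x) f * indicator (?D x) y) \<partial>?M \<partial>measure_pmf (p v))"
    unfolding emeasure_Pi_pmf_remove[OF R] split ..
  also have "\<dots> = (\<Sum>\<^sub>\<infinity>x\<in>UNIV. \<integral>\<^sup>+y. \<integral>\<^sup>+f. indicator (?E x) f * indicator (?D x) y \<partial>?M \<partial>measure_pmf (p v))"
    by (simp add: nn_integral_infsum_swap)
  also have "\<dots> = (\<Sum>\<^sub>\<infinity>x\<in>UNIV. emeasure (measure_pmf (Pi_pmf R 0 p)) (?E x) * pmf_int (p v) (\<mu> j - F (\<mu>(j := x))))"
    by (simp add: marginal nn_integral_multc nn_integral_cmult nn_integral_indicator_int_eq)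
  finally show ?thesis .
qed

section \<open>Two geometric summation identities\<close>

lemma ind_simps [simp]: "ind True = 1" "ind False = 0" "0 \<le> ind b"
  by (auto simp: ind_def)

lemma power_int_add_3: "(t::real) \<noteq> 0 \<Longrightarrow> t powi i * t powi k * t powi l = t powi (i + k + l)"
  by (simp add: power_int_add)

lemma pmf_int_Geom:
  assumes "0 < q" "q < 1" "0 \<le> d"
  shows "pmf_int (Geom q) d = ennreal ((1 - q) * q powi d)"
proof -
  have "q powi d = q ^ nat d" using assms(3) by (metis nonneg_int_cases nat_int power_int_of_nat)
  then show ?thesis using assms unfolding pmf_int_def Geom_def by (simp add: mult.commute)
qed

lemma pmf_int_neg: "d < 0 \<Longrightarrow> pmf_int p d = 0"
  by (simp add: pmf_int_def)

lemma infsum_geometric_tail: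
  fixes r :: real
  assumes "0 \<le> r" "r < 1"
  shows "(\<Sum>\<^sub>\<infinity>s\<in>UNIV. ennreal (ind (s \<le> m) * r powi (m - s))) = ennreal (1 / (1 - r))"
proof -
  have bij: "bij_betw (\<lambda>k::nat. m - int k) UNIV {s. s \<le> m}"
    by (rule bij_betwI[where g="\<lambda>s. nat (m - s)"]) auto
  have "(\<Sum>\<^sub>\<infinity>s\<in>UNIV. ennreal (ind (s \<le> m) * r powi (m - s))) = (\<Sum>\<^sub>\<infinity>s\<in>{s. s \<le> m}. ennreal (r powi (m - s)))"
    by (rule infsum_cong_neutral) (auto simp: ind_def)
  also have "\<dots> = (\<Sum>\<^sub>\<infinity>k\<in>UNIV. ennreal (r ^ k))"
    using infsum_reindex_bij_betw[OF bij, of "\<lambda>s. ennreal (r powi (m - s))"] by simp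
  also have "\<dots> = (\<Sum>k. ennreal (r ^ k))"
    by (simp add: infsum_ennreal_eq_nn_integral nn_integral_count_space_nat)
  also have "\<dots> = ennreal (1 / (1 - r))"
    by (rule suminf_ennreal_eq) (use assms in \<open>auto intro: geometric_sums\<close>)
  finally show ?thesis .
qed

lemma infsum_indicator_interval:
  fixes f :: "int \<Rightarrow> real"
  assumes "\<And>x. M \<le> x \<Longrightarrow> x \<le> m \<Longrightarrow> 0 \<le> f x"
  shows "(\<Sum>\<^sub>\<infinity>x\<in>UNIV. ennreal (ind (M \<le> x \<and> x \<le> m) * f x)) = ennreal (\<Sum>x\<in>{M..m}. f x)"
proof -
  have "(\<Sum>\<^sub>\<infinity>x\<in>UNIV. ennreal (ind (M \<le> x \<and> x \<le> m) * f x)) =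
        (\<Sum>\<^sub>\<infinity>x\<in>{M..m}. ennreal (ind (M \<le> x \<and> x \<le> m) * f x))"
    by (rule infsum_cong_neutral) (auto simp: ind_def)
  also have "\<dots> = (\<Sum>x\<in>{M..m}. ennreal (f x))" by simp
  also have "\<dots> = ennreal (\<Sum>x\<in>{M..m}. f x)" by (rule sum_ennreal) (use assms in auto)
  finally show ?thesis .
qed

lemma infsum_product_ennreal:
  fixes A B :: "int \<Rightarrow> real"
  assumes "\<And>x. 0 \<le> A x" "\<And>s. 0 \<le> B s"
  shows "(\<Sum>\<^sub>\<infinity>s\<in>UNIV. \<Sum>\<^sub>\<infinity>x\<in>UNIV. ennreal (A x * B s)) = (\<Sum>\<^sub>\<infinity>x\<in>UNIV. ennreal (A x)) * (\<Sum>\<^sub>\<infinity>s\<in>UNIV. ennreal (B s))"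
  using assms
  by (simp add: ennreal_mult infsum_cmult_left_ennreal infsum_cmult_right_ennreal)

text \<open>The factor \<open>1 - r\<close> of the geometric law cancels against the geometric series in \<open>s\<close>.\<close>

lemma geometric_convolution:
  fixes g :: "int \<Rightarrow> real"
  assumes r: "0 < r" "r < 1" and "0 \<le> K" "\<And>x. 0 \<le> g x" "0 \<le> d"
  shows "pmf_int (Geom r) d *
      (\<Sum>\<^sub>\<infinity>s\<in>UNIV. \<Sum>\<^sub>\<infinity>x\<in>UNIV. ennreal (ind (M \<le> x \<and> x \<le> m) * g x * (K * (ind (s \<le> n) * r powi (n - s)))))
    = ennreal (\<Sum>x\<in>{M..m}. g x * K * r powi d)"
proof -
  have "(\<Sum>\<^sub>\<infinity>s\<in>UNIV. ennreal (K * (ind (s \<le> n) * r powi (n - s)))) =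
        (\<Sum>\<^sub>\<infinity>s\<in>UNIV. ennreal K * ennreal (ind (s \<le> n) * r powi (n - s)))"
    by (rule infsum_cong) (use assms in \<open>simp add: ennreal_mult\<close>)
  also have "\<dots> = ennreal K * ennreal (1 / (1 - r))"
    using r by (simp add: infsum_cmult_right_ennreal infsum_geometric_tail del: ennreal_1)
  finally have tail: "(\<Sum>\<^sub>\<infinity>s\<in>UNIV. ennreal (K * (ind (s \<le> n) * r powi (n - s)))) = ennreal K * ennreal (1 / (1 - r))" .
  have "(\<Sum>\<^sub>\<infinity>x\<in>UNIV. ennreal (ind (M \<le> x \<and> x \<le> m) * g x)) = ennreal (sum g {M..m})"
    using assms by (simp add: infsum_indicator_interval)
  moreover have "0 \<le> sum g {M..m}" "0 \<le> 1 / (1 - r)" using assms by (simp_all add: sum_nonneg)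
  ultimately have "pmf_int (Geom r) d *
      (\<Sum>\<^sub>\<infinity>s\<in>UNIV. \<Sum>\<^sub>\<infinity>x\<in>UNIV. ennreal (ind (M \<le> x \<and> x \<le> m) * g x * (K * (ind (s \<le> n) * r powi (n - s)))))
    = ennreal ((1 - r) * r powi d) * (ennreal (sum g {M..m}) * (ennreal K * ennreal (1 / (1 - r))))"
    using assms by (simp add: pmf_int_Geom infsum_product_ennreal tail)
  also have "\<dots> = ennreal ((1 - r) * r powi d * (sum g {M..m} * (K * (1 / (1 - r)))))"
    using assms \<open>0 \<le> sum g {M..m}\<close> \<open>0 \<le> 1 / (1 - r)\<close>
    by (simp add: ennreal_mult'[symmetric] ennreal_mult[symmetric] del: ennreal_1 ennreal_mult)
  also have "(1 - r) * r powi d * (sum g {M..m} * (K * (1 / (1 - r)))) = sum g {M..m} * K * r powi d"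
    using r by simp
  also have "\<dots> = (\<Sum>x\<in>{M..m}. g x * K * r powi d)"
    by (simp add: sum_distrib_right)
  finally show ?thesis .
qed

lemma geometric_corner_lhs:
  fixes \<alpha> \<beta> :: real and X Y u v z :: int
  assumes a: "0 < \<alpha>" "0 < \<beta>" "\<alpha> * \<beta> < 1" and z: "max X Y \<le> z"
  shows "pmf_int (Geom (\<beta> * \<alpha>)) (z - max X Y) *
     (\<Sum>\<^sub>\<infinity>s\<in>UNIV. \<Sum>\<^sub>\<infinity>x\<in>UNIV. ennreal (((\<alpha> powi (X - x) * ind (x \<le> X)) * (\<alpha> powi (u - s) * ind (s \<le> u)) * ind (u \<le> x)) *
                                     ((\<beta> powi (Y - x) * ind (x \<le> Y)) * (\<beta> powi (v - s) * ind (s \<le> v)) * ind (v \<le> x))))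
   = ennreal (\<Sum>x\<in>{max u v..min X Y}. \<alpha> powi (X - x) * \<beta> powi (Y - x) *
                 (\<alpha> powi (u - min u v) * \<beta> powi (v - min u v)) * (\<alpha> * \<beta>) powi (z - max X Y))"
proof -
  define M m mn r where "M = max u v" and "m = min X Y" and "mn = min u v" and "r = \<alpha> * \<beta>"
  define g K where "g = (\<lambda>x. \<alpha> powi (X - x) * \<beta> powi (Y - x))" and "K = \<alpha> powi (u - mn) * \<beta> powi (v - mn)"
  have summand: "(((\<alpha> powi (X - x) * ind (x \<le> X)) * (\<alpha> powi (u - s) * ind (s \<le> u)) * ind (u \<le> x)) *
         ((\<beta> powi (Y - x) * ind (x \<le> Y)) * (\<beta> powi (v - s) * ind (s \<le> v)) * ind (v \<le> x)))
      = ind (M \<le> x \<and> x \<le> m) * g x * (K * (ind (s \<le> mn) * r powi (mn - s)))" for x s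
  proof (cases "M \<le> x \<and> x \<le> m \<and> s \<le> mn")
    case True
    then have "\<alpha> powi (u - s) = \<alpha> powi (u - mn) * \<alpha> powi (mn - s)"
      "\<beta> powi (v - s) = \<beta> powi (v - mn) * \<beta> powi (mn - s)"
      using a by (simp_all add: power_int_add[symmetric])
    then show ?thesis using True
      by (simp add: M_def m_def mn_def r_def g_def K_def power_int_mult_distrib mult_ac)
  qed (auto simp: M_def m_def mn_def)
  have "\<beta> * \<alpha> = r" by (simp add: r_def)
  have "pmf_int (Geom r) (z - max X Y) *
      (\<Sum>\<^sub>\<infinity>s\<in>UNIV. \<Sum>\<^sub>\<infinity>x\<in>UNIV. ennreal (ind (M \<le> x \<and> x \<le> m) * g x * (K * (ind (s \<le> mn) * r powi (mn - s)))))
    = ennreal (\<Sum>x\<in>{M..m}. g x * K * r powi (z - max X Y))"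
    using a z by (intro geometric_convolution) (auto simp: g_def K_def r_def)
  then show ?thesis
    unfolding summand \<open>\<beta> * \<alpha> = r\<close> M_def m_def mn_def g_def K_def r_def .
qed

lemma geometric_corner_rhs:
  fixes \<alpha> \<beta> :: real and X Y u v z :: int
  assumes a: "0 < \<alpha>" "0 < \<beta>" and z: "max X Y \<le> z"
  shows "(\<Sum>\<^sub>\<infinity>s\<in>UNIV. ennreal (((\<beta> powi (z - X) * ind (X \<le> z)) * (\<beta> powi (s - u) * ind (u \<le> s)) * ind (s \<le> X)) *
                          ((\<alpha> powi (z - Y) * ind (Y \<le> z)) * (\<alpha> powi (s - v) * ind (v \<le> s)) * ind (s \<le> Y))))
   = ennreal (\<Sum>s\<in>{max u v..min X Y}. \<beta> powi (z - X + s - u) * \<alpha> powi (z - Y + s - v))"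
proof -
  have summand: "(((\<beta> powi (z - X) * ind (X \<le> z)) * (\<beta> powi (s - u) * ind (u \<le> s)) * ind (s \<le> X)) *
         ((\<alpha> powi (z - Y) * ind (Y \<le> z)) * (\<alpha> powi (s - v) * ind (v \<le> s)) * ind (s \<le> Y)))
      = ind (max u v \<le> s \<and> s \<le> min X Y) * (\<beta> powi (z - X + s - u) * \<alpha> powi (z - Y + s - v))" for s
  proof (cases "max u v \<le> s \<and> s \<le> min X Y")
    case True
    have "\<beta> powi ((z - X) + (s - u)) = \<beta> powi (z - X) * \<beta> powi (s - u)"
      "\<alpha> powi ((z - Y) + (s - v)) = \<alpha> powi (z - Y) * \<alpha> powi (s - v)"
      using a by (simp_all add: power_int_add)
    then have "\<beta> powi (z - X + s - u) = \<beta> powi (z - X) * \<beta> powi (s - u)"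
      "\<alpha> powi (z - Y + s - v) = \<alpha> powi (z - Y) * \<alpha> powi (s - v)"
      by (simp_all add: diff_add_eq add_diff_eq)
    then show ?thesis using True z by (simp add: mult_ac)
  qed auto
  show ?thesis
    unfolding summand by (rule infsum_indicator_interval) (use a in simp)
qed

text \<open>After summing out, both sides are sums over \<open>[max u v, min X Y]\<close>, matched by the
  reflection \<open>x \<mapsto> max u v + min X Y - x\<close>.\<close>

lemma geometric_corner_identity:
  fixes \<alpha> \<beta> :: real and X Y u v z :: int
  assumes a: "0 < \<alpha>" "0 < \<beta>" "\<alpha> * \<beta> < 1"
  shows "pmf_int (Geom (\<beta> * \<alpha>)) (z - max X Y) *
     (\<Sum>\<^sub>\<infinity>s\<in>UNIV. \<Sum>\<^sub>\<infinity>x\<in>UNIV. ennreal (((\<alpha> powi (X - x) * ind (x \<le> X)) * (\<alpha> powi (u - s) * ind (s \<le> u)) * ind (u \<le> x)) *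
                                     ((\<beta> powi (Y - x) * ind (x \<le> Y)) * (\<beta> powi (v - s) * ind (s \<le> v)) * ind (v \<le> x))))
   = (\<Sum>\<^sub>\<infinity>s\<in>UNIV. ennreal (((\<beta> powi (z - X) * ind (X \<le> z)) * (\<beta> powi (s - u) * ind (u \<le> s)) * ind (s \<le> X)) *
                          ((\<alpha> powi (z - Y) * ind (Y \<le> z)) * (\<alpha> powi (s - v) * ind (v \<le> s)) * ind (s \<le> Y))))"
    (is "?L = ?R")
proof (cases "z < max X Y")
  case True
  have "?R = 0"
    by (rule infsum_0) (use True in \<open>auto simp: max_def split: if_splits\<close>)
  moreover have "?L = 0" using True pmf_int_neg[of "z - max X Y"] by simp
  ultimately show ?thesis by simp
next
  case False
  then have z: "max X Y \<le> z" by linarith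
  define M m mn where "M = max u v" and "m = min X Y" and "mn = min u v"
  have reflect: "(\<Sum>x\<in>{M..m}. \<alpha> powi (X - x) * \<beta> powi (Y - x) * (\<alpha> powi (u - mn) * \<beta> powi (v - mn)) * (\<alpha> * \<beta>) powi (z - max X Y)) =
        (\<Sum>s\<in>{M..m}. \<beta> powi (z - X + s - u) * \<alpha> powi (z - Y + s - v))"
  proof (rule sum.reindex_bij_witness[where i="\<lambda>t. M + m - t" and j="\<lambda>t. M + m - t"])
    fix x
    have e: "X - x + (u - mn) + (z - max X Y) = z - Y + (M + m - x) - v"
            "Y - x + (v - mn) + (z - max X Y) = z - X + (M + m - x) - u"
      by (auto simp: M_def m_def mn_def)
    have "\<alpha> powi (X - x) * \<beta> powi (Y - x) * (\<alpha> powi (u - mn) * \<beta> powi (v - mn)) * (\<alpha> * \<beta>) powi (z - max X Y) =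
        (\<alpha> powi (X - x) * \<alpha> powi (u - mn) * \<alpha> powi (z - max X Y)) *
        (\<beta> powi (Y - x) * \<beta> powi (v - mn) * \<beta> powi (z - max X Y))"
      by (simp add: power_int_mult_distrib mult_ac)
    also have "\<dots> = \<alpha> powi (z - Y + (M + m - x) - v) * \<beta> powi (z - X + (M + m - x) - u)"
      using a by (simp only: power_int_add_3[of \<alpha>] power_int_add_3[of \<beta>] e less_irrefl not_False_eq_True)
    finally show "\<beta> powi (z - X + (M + m - x) - u) * \<alpha> powi (z - Y + (M + m - x) - v) =
        \<alpha> powi (X - x) * \<beta> powi (Y - x) * (\<alpha> powi (u - mn) * \<beta> powi (v - mn)) * (\<alpha> * \<beta>) powi (z - max X Y)"
      by simp
  qed auto
  show ?thesis
    unfolding geometric_corner_lhs[OF a z] reflect[unfolded M_def m_def mn_def] geometric_corner_rhs[OF a(1,2) z] ..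
qed

lemma geometric_boundary_lhs:
  fixes b c :: real and Y v z :: int
  assumes a: "0 < b" "0 < c" "b * c < 1" and z: "Y \<le> z"
  shows "pmf_int (Geom (b * c)) (z - Y) *
     (\<Sum>\<^sub>\<infinity>s\<in>UNIV. \<Sum>\<^sub>\<infinity>x\<in>UNIV. ennreal (c powi (x - s) * ((b powi (Y - x) * ind (x \<le> Y)) * (b powi (v - s) * ind (s \<le> v)) * ind (v \<le> x))))
   = ennreal (\<Sum>x\<in>{v..Y}. c powi (x - v) * b powi (Y - x) * 1 * (b * c) powi (z - Y))"
proof -
  define r g where "r = b * c" and "g = (\<lambda>x. c powi (x - v) * b powi (Y - x))"
  have summand: "c powi (x - s) * ((b powi (Y - x) * ind (x \<le> Y)) * (b powi (v - s) * ind (s \<le> v)) * ind (v \<le> x))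
      = ind (v \<le> x \<and> x \<le> Y) * g x * (1 * (ind (s \<le> v) * r powi (v - s)))" for x s
  proof (cases "v \<le> x \<and> x \<le> Y \<and> s \<le> v")
    case True
    have "c powi ((x - v) + (v - s)) = c powi (x - v) * c powi (v - s)"
      by (rule power_int_add) (use a in simp)
    then show ?thesis using True by (simp add: r_def g_def power_int_mult_distrib mult_ac)
  qed auto
  have "pmf_int (Geom r) (z - Y) *
      (\<Sum>\<^sub>\<infinity>s\<in>UNIV. \<Sum>\<^sub>\<infinity>x\<in>UNIV. ennreal (ind (v \<le> x \<and> x \<le> Y) * g x * (1 * (ind (s \<le> v) * r powi (v - s)))))
    = ennreal (\<Sum>x\<in>{v..Y}. g x * 1 * r powi (z - Y))"
    using a z by (intro geometric_convolution) (auto simp: g_def r_def)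
  then show ?thesis
    unfolding summand r_def g_def .
qed

lemma geometric_boundary_rhs:
  fixes b c :: real and Y v z :: int
  assumes a: "0 < b" "0 < c" and z: "Y \<le> z"
  shows "(\<Sum>\<^sub>\<infinity>s\<in>UNIV. ennreal (c powi (z - s) * ((b powi (z - Y) * ind (Y \<le> z)) * (b powi (s - v) * ind (v \<le> s)) * ind (s \<le> Y))))
   = ennreal (\<Sum>s\<in>{v..Y}. c powi (z - s) * b powi (z - Y + s - v))"
proof -
  have summand: "c powi (z - s) * ((b powi (z - Y) * ind (Y \<le> z)) * (b powi (s - v) * ind (v \<le> s)) * ind (s \<le> Y))
      = ind (v \<le> s \<and> s \<le> Y) * (c powi (z - s) * b powi (z - Y + s - v))" for s
  proof (cases "v \<le> s \<and> s \<le> Y")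
    case True
    have "b powi ((z - Y) + (s - v)) = b powi (z - Y) * b powi (s - v)"
      by (rule power_int_add) (use a in simp)
    then show ?thesis using True z by (simp add: diff_add_eq add_diff_eq mult_ac)
  qed auto
  show ?thesis
    unfolding summand by (rule infsum_indicator_interval) (use a in simp)
qed

lemma geometric_boundary_identity:
  fixes b c :: real and Y v z :: int
  assumes a: "0 < b" "0 < c" "b * c < 1"
  shows "pmf_int (Geom (b * c)) (z - Y) *
     (\<Sum>\<^sub>\<infinity>s\<in>UNIV. \<Sum>\<^sub>\<infinity>x\<in>UNIV. ennreal (c powi (x - s) * ((b powi (Y - x) * ind (x \<le> Y)) * (b powi (v - s) * ind (s \<le> v)) * ind (v \<le> x))))
   = (\<Sum>\<^sub>\<infinity>s\<in>UNIV. ennreal (c powi (z - s) * ((b powi (z - Y) * ind (Y \<le> z)) * (b powi (s - v) * ind (v \<le> s)) * ind (s \<le> Y))))"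
    (is "?L = ?R")
proof (cases "z < Y")
  case True
  have "?R = 0" by (rule infsum_0) (use True in simp)
  moreover have "?L = 0" using True pmf_int_neg[of "z - Y"] by simp
  ultimately show ?thesis by simp
next
  case False
  then have z: "Y \<le> z" by simp
  have reflect: "(\<Sum>x\<in>{v..Y}. c powi (x - v) * b powi (Y - x) * 1 * (b * c) powi (z - Y)) =
        (\<Sum>s\<in>{v..Y}. c powi (z - s) * b powi (z - Y + s - v))"
  proof (rule sum.reindex_bij_witness[where i="\<lambda>t. v + Y - t" and j="\<lambda>t. v + Y - t"])
    fix x
    have e: "x - v + (z - Y) = z - (v + Y - x)" "Y - x + (z - Y) = z - Y + (v + Y - x) - v" by simp_all
    have "c powi (x - v) * b powi (Y - x) * 1 * (b * c) powi (z - Y) =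
          (c powi (x - v) * c powi (z - Y)) * (b powi (Y - x) * b powi (z - Y))"
      by (simp add: power_int_mult_distrib mult_ac)
    also have "\<dots> = c powi (z - (v + Y - x)) * b powi (z - Y + (v + Y - x) - v)"
      using a by (simp add: power_int_add[symmetric] e)
    finally show "c powi (z - (v + Y - x)) * b powi (z - Y + (v + Y - x) - v) =
        c powi (x - v) * b powi (Y - x) * 1 * (b * c) powi (z - Y)"
      by simp
  qed auto
  show ?thesis
    unfolding geometric_boundary_lhs[OF a z] reflect geometric_boundary_rhs[OF a(1,2) z] ..
qed

section \<open>Factorisation of the two-layer weight\<close>

definition edge_factor :: "(int \<Rightarrow> real) \<Rightarrow> (nat \<Rightarrow> vertex) \<Rightarrow> (nat \<Rightarrow> int) \<Rightarrow> (nat \<Rightarrow> int) \<Rightarrow> nat \<Rightarrow> real" where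
  "edge_factor a P l1 l2 j =
     (lab a P j powi (l1 (up P j) - l1 (low P j)) * ind (l1 (up P j) \<ge> l1 (low P j))) *
     (lab a P j powi (l2 (up P j) - l2 (low P j)) * ind (l2 (up P j) \<ge> l2 (low P j))) *
     ind (l1 (low P j) \<ge> l2 (up P j))"

lemma wtGP_eq_edge_factors:
  "wtGP N a c1 c2 P l1 l2 = c1 powi (l1 0 - l2 0) * c2 powi (l1 N - l2 N) * (\<Prod>j\<in>{1..N}. edge_factor a P l1 l2 j)"
  unfolding wtGP_def edge_factor_def ..

lemma edge_factor_horiz:
  assumes "horiz P i"
  shows "edge_factor a P l1 l2 i =
    (a (fst (P i)) powi (l1 i - l1 (i-1)) * ind (l1 (i-1) \<le> l1 i)) *
    (a (fst (P i)) powi (l2 i - l2 (i-1)) * ind (l2 (i-1) \<le> l2 i)) * ind (l2 i \<le> l1 (i-1))"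
  using assms unfolding edge_factor_def lab_def up_def low_def by simp

lemma edge_factor_vert:
  assumes "\<not> horiz P i"
  shows "edge_factor a P l1 l2 i =
    (a (snd (P (i-1))) powi (l1 (i-1) - l1 i) * ind (l1 i \<le> l1 (i-1))) *
    (a (snd (P (i-1))) powi (l2 (i-1) - l2 i) * ind (l2 i \<le> l2 (i-1))) * ind (l2 (i-1) \<le> l1 i)"
  using assms unfolding edge_factor_def lab_def up_def low_def by simp

lemma edge_factor_nonneg:
  assumes "\<And>k. 0 < a k"
  shows "0 \<le> edge_factor a P l1 l2 i"
  using assms[THEN less_imp_le] unfolding edge_factor_def lab_def by (auto intro!: mult_nonneg_nonneg)

lemma edge_factor_cong:
  assumes "P i = P' i" "P (i-1) = P' (i-1)"
    "l1 i = l1' i" "l1 (i-1) = l1' (i-1)" "l2 i = l2' i" "l2 (i-1) = l2' (i-1)"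
  shows "edge_factor a P l1 l2 i = edge_factor a P' l1' l2' i"
  using assms unfolding edge_factor_def lab_def up_def low_def horiz_def by simp

lemma wtGP_cong_path:
  assumes "\<And>i. i \<le> N \<Longrightarrow> P i = P' i"
  shows "wtGP N a c1 c2 P l1 l2 = wtGP N a c1 c2 P' l1 l2"
  unfolding wtGP_eq_edge_factors using assms by (auto intro!: prod.cong edge_factor_cong)

lemma wtP_cong_path: "(\<And>i. i \<le> N \<Longrightarrow> P i = P' i) \<Longrightarrow> wtP N a c1 c2 P l = wtP N a c1 c2 P' l"
  unfolding wtP_def using wtGP_cong_path by metis

lemma wtGP_shift:
  assumes "\<And>i. i \<le> N \<Longrightarrow> l1 i = l1' i + c" "\<And>i. i \<le> N \<Longrightarrow> l2 i = l2' i + c"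
  shows "wtGP N a c1 c2 P l1 l2 = wtGP N a c1 c2 P l1' l2'"
proof -
  have "up P i \<le> N" "low P i \<le> N" if "i \<in> {1..N}" for i
    using that unfolding up_def low_def by auto
  then have "edge_factor a P l1 l2 i = edge_factor a P l1' l2' i" if "i \<in> {1..N}" for i
    unfolding edge_factor_def using assms that by simp
  then show ?thesis unfolding wtGP_eq_edge_factors using assms[of 0] assms[of N] by simp
qed

definition wtGP_at :: "nat \<Rightarrow> (int \<Rightarrow> real) \<Rightarrow> real \<Rightarrow> real \<Rightarrow> (nat \<Rightarrow> vertex) \<Rightarrow> nat \<Rightarrow> (nat \<Rightarrow> int) \<Rightarrow> (nat \<Rightarrow> int) \<Rightarrow> real" where
  "wtGP_at N a c1 c2 P j l1 l2 =
     (if j = 0 then c1 powi (l1 0 - l2 0) else 1) * (if j = N then c2 powi (l1 N - l2 N) else 1) *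
     (\<Prod>i\<in>{1..N} \<inter> {j, Suc j}. edge_factor a P l1 l2 i)"

definition wtGP_off :: "nat \<Rightarrow> (int \<Rightarrow> real) \<Rightarrow> real \<Rightarrow> real \<Rightarrow> (nat \<Rightarrow> vertex) \<Rightarrow> nat \<Rightarrow> (nat \<Rightarrow> int) \<Rightarrow> (nat \<Rightarrow> int) \<Rightarrow> real" where
  "wtGP_off N a c1 c2 P j l1 l2 =
     (if j = 0 then 1 else c1 powi (l1 0 - l2 0)) * (if j = N then 1 else c2 powi (l1 N - l2 N)) *
     (\<Prod>i\<in>{1..N} - {j, Suc j}. edge_factor a P l1 l2 i)"

lemma wtGP_eq_off_at: "wtGP N a c1 c2 P l1 l2 = wtGP_off N a c1 c2 P j l1 l2 * wtGP_at N a c1 c2 P j l1 l2"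
proof -
  have "(\<Prod>i\<in>{1..N}. edge_factor a P l1 l2 i) =
        (\<Prod>i\<in>{1..N} \<inter> {j, Suc j}. edge_factor a P l1 l2 i) * (\<Prod>i\<in>{1..N} - {j, Suc j}. edge_factor a P l1 l2 i)"
    by (rule prod.Int_Diff) simp
  then show ?thesis unfolding wtGP_eq_edge_factors wtGP_off_def wtGP_at_def by (simp add: mult_ac)
qed

lemma wtGP_at_nonneg: "(\<And>k. 0 < a k) \<Longrightarrow> 0 < c1 \<Longrightarrow> 0 < c2 \<Longrightarrow> 0 \<le> wtGP_at N a c1 c2 P j l1 l2"
  unfolding wtGP_at_def by (auto intro!: mult_nonneg_nonneg prod_nonneg edge_factor_nonneg)

lemma wtGP_off_nonneg: "(\<And>k. 0 < a k) \<Longrightarrow> 0 < c1 \<Longrightarrow> 0 < c2 \<Longrightarrow> 0 \<le> wtGP_off N a c1 c2 P j l1 l2"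
  unfolding wtGP_off_def by (auto intro!: mult_nonneg_nonneg prod_nonneg edge_factor_nonneg)

lemma wtGP_off_cong:
  assumes "\<And>i. i \<noteq> j \<Longrightarrow> P i = P' i" "\<And>i. i \<noteq> j \<Longrightarrow> l1 i = l1' i" "\<And>i. i \<noteq> j \<Longrightarrow> l2 i = l2' i"
  shows "wtGP_off N a c1 c2 P j l1 l2 = wtGP_off N a c1 c2 P' j l1' l2'"
proof -
  have "edge_factor a P l1 l2 i = edge_factor a P' l1' l2' i" if "i \<in> {1..N} - {j, Suc j}" for i
    using that assms by (intro edge_factor_cong) auto
  then show ?thesis unfolding wtGP_off_def using assms by (auto intro!: prod.cong)
qed

lemma countable_Zvec: "countable (Zvec N)"
proof -
  have "Zvec N \<subseteq> range (\<lambda>xs::int list. \<lambda>i. if i < length xs then xs ! i else 0)"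
  proof
    fix f assume "f \<in> Zvec N"
    then have "f = (\<lambda>i. if i < length (map f [0..<Suc N]) then map f [0..<Suc N] ! i else 0)"
      unfolding Zvec_def by (auto simp del: upt_Suc simp: fun_eq_iff)
    then show "f \<in> range (\<lambda>xs::int list. \<lambda>i. if i < length xs then xs ! i else 0)" by blast
  qed
  then show ?thesis by (rule countable_subset) simp
qed

lemma infsum_Zvec_split:
  fixes g :: "(nat \<Rightarrow> int) \<Rightarrow> ennreal"
  assumes j: "j \<le> N"
  shows "(\<Sum>\<^sub>\<infinity>l\<in>Zvec N. g l) = (\<Sum>\<^sub>\<infinity>l0\<in>{l \<in> Zvec N. l j = 0}. \<Sum>\<^sub>\<infinity>s\<in>UNIV. g (l0(j := s)))"
proof -
  let ?Z0 = "{l \<in> Zvec N. l j = 0}"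
  have bij: "bij_betw (\<lambda>(l0, s). l0(j := s)) (?Z0 \<times> UNIV) (Zvec N)"
    by (rule bij_betwI[where g="\<lambda>l. (l(j := 0), l j)"]) (use j in \<open>auto simp: Zvec_def fun_eq_iff\<close>)
  have "countable ?Z0" by (rule countable_subset[OF _ countable_Zvec]) auto
  then have "(\<Sum>\<^sub>\<infinity>z\<in>?Z0 \<times> UNIV. g ((\<lambda>(l0, s). l0(j := s)) z)) = (\<Sum>\<^sub>\<infinity>l0\<in>?Z0. \<Sum>\<^sub>\<infinity>s\<in>UNIV. g (l0(j := s)))"
    by (simp add: infsum_Sigma_ennreal)
  then show ?thesis using infsum_reindex_bij_betw[OF bij, of g] by simp
qed

section \<open>Pushing one vertex of the path across a corner\<close>

text \<open>\<open>h\<close> arises from \<open>h'\<close> by pushing vertex \<open>j\<close> up across a corner: edge \<open>e\<^sub>j\<close> turns from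
  vertical to horizontal and \<open>e\<^sub>j\<^sub>+\<^sub>1\<close> from horizontal to vertical (only one of the two edges
  exists when \<open>j = 0\<close> or \<open>j = N\<close>).\<close>

definition adds_box :: "nat \<Rightarrow> (nat \<Rightarrow> int) \<Rightarrow> (nat \<Rightarrow> int) \<Rightarrow> nat \<Rightarrow> bool" where
  "adds_box N h' h j \<longleftrightarrow> j \<le> N \<and> h = h'(j := h' j + 1) \<and> (j = 0 \<longrightarrow> h' 1 = h' 0) \<and>
     (j = N \<longrightarrow> h' (N - 1) = h' N + 1) \<and> (0 < j \<and> j < N \<longrightarrow> h' (j - 1) = h' j + 1 \<and> h' (Suc j) = h' j)"

text \<open>The larger of the last passage values at the two lattice predecessors of the pushed vertex.\<close>

definition neighbour_max :: "nat \<Rightarrow> nat \<Rightarrow> (nat \<Rightarrow> int) \<Rightarrow> int" where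
  "neighbour_max N j \<mu> = (if j = 0 then \<mu> 1 else if j = N then \<mu> (N - 1) else max (\<mu> (j - 1)) (\<mu> (Suc j)))"

lemma neighbour_max_upd: "1 \<le> N \<Longrightarrow> neighbour_max N j (\<mu>(j := x)) = neighbour_max N j \<mu>"
  unfolding neighbour_max_def by auto

locale lpp_strip =
  fixes N :: nat and a :: "int \<Rightarrow> real" and c1 c2 :: real
  assumes N: "1 \<le> N" and a_pos: "\<And>k. 0 < a k" and a_periodic: "\<And>k. a (k + int N) = a k"
    and c1: "0 < c1" and c2: "0 < c2" and aa: "\<And>i k. a i * a k < 1"
    and ac1: "\<And>i. a i * c1 < 1" and ac2: "\<And>i. a i * c2 < 1"
begin

lemma local_identity_interior:
  assumes box: "adds_box N h' h j" and j: "0 < j" "j < N"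
  shows "pmf_int (Geom (qpar N a c1 c2 (path_of h j))) (l1 j - neighbour_max N j l1) *
      (\<Sum>\<^sub>\<infinity>s\<in>UNIV. \<Sum>\<^sub>\<infinity>x\<in>UNIV. ennreal (wtGP_at N a c1 c2 (path_of h') j (l1(j := x)) (l2(j := s))))
    = (\<Sum>\<^sub>\<infinity>s\<in>UNIV. ennreal (wtGP_at N a c1 c2 (path_of h) j l1 (l2(j := s))))"
proof -
  have hj: "h = h'(j := h' j + 1)" and h1: "h' (j - 1) = h' j + 1" and h2: "h' (Suc j) = h' j"
    using box j unfolding adds_box_def by auto
  define \<alpha> \<beta> where "\<alpha> = a (h' j + 1)" and "\<beta> = a (h' j + 1 + int j)"
  have jj: "j - 1 \<noteq> j" "Suc j \<noteq> j" "Suc j - 1 = j" "j \<noteq> 0" "j \<noteq> N" "1 \<le> j" using j by auto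
  have at: "wtGP_at N a c1 c2 P j L1 L2 = edge_factor a P L1 L2 j * edge_factor a P L1 L2 (Suc j)" for P L1 L2
  proof -
    have "{1..N} \<inter> {j, Suc j} = {j, Suc j}" using j by auto
    then show ?thesis unfolding wtGP_at_def using jj by simp
  qed
  have before: "\<not> horiz (path_of h') j" "horiz (path_of h') (Suc j)"
    and after: "horiz (path_of h) j" "\<not> horiz (path_of h) (Suc j)"
    using h1 h2 hj jj by (simp_all add: horiz_path_of)
  have labels: "a (snd (path_of h' (j - 1))) = \<alpha>" "a (fst (path_of h' (Suc j))) = \<beta>"
    "a (fst (path_of h j)) = \<beta>" "a (snd (path_of h (Suc j - 1))) = \<alpha>"
    using h1 h2 hj jj by (simp_all add: path_of_def \<alpha>_def \<beta>_def algebra_simps)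
  have "qpar N a c1 c2 (path_of h j) = \<beta> * \<alpha>"
    using hj jj by (simp add: qpar_def path_of_def \<alpha>_def \<beta>_def)
  moreover have "neighbour_max N j l1 = max (l1 (j - 1)) (l1 (Suc j))"
    using jj by (simp add: neighbour_max_def)
  ultimately show ?thesis
    unfolding at edge_factor_vert[OF before(1)] edge_factor_horiz[OF before(2)]
      edge_factor_horiz[OF after(1)] edge_factor_vert[OF after(2)] labels
    using jj by (simp add: geometric_corner_identity \<alpha>_def \<beta>_def a_pos aa)
qed

lemma local_identity_first:
  assumes box: "adds_box N h' h 0"
  shows "pmf_int (Geom (qpar N a c1 c2 (path_of h 0))) (l1 0 - neighbour_max N 0 l1) *
      (\<Sum>\<^sub>\<infinity>s\<in>UNIV. \<Sum>\<^sub>\<infinity>x\<in>UNIV. ennreal (wtGP_at N a c1 c2 (path_of h') 0 (l1(0 := x)) (l2(0 := s))))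
    = (\<Sum>\<^sub>\<infinity>s\<in>UNIV. ennreal (wtGP_at N a c1 c2 (path_of h) 0 l1 (l2(0 := s))))"
proof -
  have hj: "h = h'(0 := h' 0 + 1)" and h1: "h' 1 = h' 0"
    using box unfolding adds_box_def by auto
  define b where "b = a (h' 0 + 1)"
  have "{1..N} \<inter> {0, Suc 0} = {1}" "0 \<noteq> N" using N by auto
  then have at: "wtGP_at N a c1 c2 P 0 L1 L2 = c1 powi (L1 0 - L2 0) * edge_factor a P L1 L2 1" for P L1 L2
    unfolding wtGP_at_def by simp
  have before: "horiz (path_of h') 1" and after: "\<not> horiz (path_of h) 1"
    using h1 hj by (simp_all add: horiz_path_of)
  have labels: "a (fst (path_of h' 1)) = b" "a (snd (path_of h (1 - 1))) = b"
    using h1 hj by (simp_all add: path_of_def b_def)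
  have "qpar N a c1 c2 (path_of h 0) = b * c1"
    using hj by (simp add: qpar_def path_of_def b_def)
  then show ?thesis
    unfolding at edge_factor_horiz[OF before] edge_factor_vert[OF after] labels
    by (simp add: neighbour_max_def geometric_boundary_identity b_def a_pos c1 ac1)
qed

text \<open>The corner weight at \<open>(m + N, m)\<close> is \<open>a\<^sub>m c\<^sub>2\<close>, while the new horizontal edge carries
  \<open>a\<^sub>m\<^sub>+\<^sub>N\<close>; periodicity of \<open>a\<close> makes the two agree.\<close>

lemma local_identity_last:
  assumes box: "adds_box N h' h N"
  shows "pmf_int (Geom (qpar N a c1 c2 (path_of h N))) (l1 N - neighbour_max N N l1) *
      (\<Sum>\<^sub>\<infinity>s\<in>UNIV. \<Sum>\<^sub>\<infinity>x\<in>UNIV. ennreal (wtGP_at N a c1 c2 (path_of h') N (l1(N := x)) (l2(N := s))))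
    = (\<Sum>\<^sub>\<infinity>s\<in>UNIV. ennreal (wtGP_at N a c1 c2 (path_of h) N l1 (l2(N := s))))"
proof -
  have hj: "h = h'(N := h' N + 1)" and h1: "h' (N - 1) = h' N + 1"
    using box unfolding adds_box_def by auto
  define b where "b = a (h' N + 1)"
  have NN: "N \<noteq> 0" "N - 1 \<noteq> N" "1 \<le> N" using N by auto
  have "{1..N} \<inter> {N, Suc N} = {N}" using N by auto
  then have at: "wtGP_at N a c1 c2 P N L1 L2 = c2 powi (L1 N - L2 N) * edge_factor a P L1 L2 N" for P L1 L2
    unfolding wtGP_at_def using NN by simp
  have before: "\<not> horiz (path_of h') N" and after: "horiz (path_of h) N"
    using h1 hj NN by (simp_all add: horiz_path_of)
  have labels: "a (snd (path_of h' (N - 1))) = b" "a (fst (path_of h N)) = b"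
    using h1 hj a_periodic by (simp_all add: path_of_def b_def)
  have "qpar N a c1 c2 (path_of h N) = b * c2"
    using hj NN by (simp add: qpar_def path_of_def b_def)
  then show ?thesis
    unfolding at edge_factor_vert[OF before] edge_factor_horiz[OF after] labels
    using NN by (simp add: neighbour_max_def geometric_boundary_identity b_def a_pos c2 ac2)
qed

lemma local_identity:
  assumes box: "adds_box N h' h j"
  shows "pmf_int (Geom (qpar N a c1 c2 (path_of h j))) (l1 j - neighbour_max N j l1) *
      (\<Sum>\<^sub>\<infinity>s\<in>UNIV. \<Sum>\<^sub>\<infinity>x\<in>UNIV. ennreal (wtGP_at N a c1 c2 (path_of h') j (l1(j := x)) (l2(j := s))))
    = (\<Sum>\<^sub>\<infinity>s\<in>UNIV. ennreal (wtGP_at N a c1 c2 (path_of h) j l1 (l2(j := s))))"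
proof -
  have "j \<le> N" using box unfolding adds_box_def by auto
  then consider "j = 0" | "j = N" | "0 < j \<and> j < N" by linarith
  then show ?thesis
    using local_identity_first local_identity_last local_identity_interior box by cases auto
qed

lemma infsum_wtGP_factor_at:
  assumes box: "adds_box N h' h j"
  shows "(\<Sum>\<^sub>\<infinity>s\<in>UNIV. \<Sum>\<^sub>\<infinity>x\<in>UNIV. ennreal (wtGP N a c1 c2 (path_of h') (l1(j := x)) (l2(j := s)))) =
      ennreal (wtGP_off N a c1 c2 (path_of h) j l1 l2) *
      (\<Sum>\<^sub>\<infinity>s\<in>UNIV. \<Sum>\<^sub>\<infinity>x\<in>UNIV. ennreal (wtGP_at N a c1 c2 (path_of h') j (l1(j := x)) (l2(j := s))))"
    and "(\<Sum>\<^sub>\<infinity>s\<in>UNIV. ennreal (wtGP N a c1 c2 (path_of h) l1 (l2(j := s)))) =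
      ennreal (wtGP_off N a c1 c2 (path_of h) j l1 l2) *
      (\<Sum>\<^sub>\<infinity>s\<in>UNIV. ennreal (wtGP_at N a c1 c2 (path_of h) j l1 (l2(j := s))))"
proof -
  have "h = h'(j := h' j + 1)" using box unfolding adds_box_def by auto
  then have off: "wtGP_off N a c1 c2 (path_of h') j (l1(j := x)) (l2(j := s)) = wtGP_off N a c1 c2 (path_of h) j l1 l2"
    "wtGP_off N a c1 c2 (path_of h) j l1 (l2(j := s)) = wtGP_off N a c1 c2 (path_of h) j l1 l2" for x s
    by (auto intro!: wtGP_off_cong simp: path_of_def)
  note nonneg = wtGP_off_nonneg[OF a_pos c1 c2] wtGP_at_nonneg[OF a_pos c1 c2]
  show "(\<Sum>\<^sub>\<infinity>s\<in>UNIV. \<Sum>\<^sub>\<infinity>x\<in>UNIV. ennreal (wtGP N a c1 c2 (path_of h') (l1(j := x)) (l2(j := s)))) =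
      ennreal (wtGP_off N a c1 c2 (path_of h) j l1 l2) *
      (\<Sum>\<^sub>\<infinity>s\<in>UNIV. \<Sum>\<^sub>\<infinity>x\<in>UNIV. ennreal (wtGP_at N a c1 c2 (path_of h') j (l1(j := x)) (l2(j := s))))"
    unfolding wtGP_eq_off_at[where j=j] off using nonneg
    by (simp add: ennreal_mult infsum_cmult_right_ennreal)
  show "(\<Sum>\<^sub>\<infinity>s\<in>UNIV. ennreal (wtGP N a c1 c2 (path_of h) l1 (l2(j := s)))) =
      ennreal (wtGP_off N a c1 c2 (path_of h) j l1 l2) *
      (\<Sum>\<^sub>\<infinity>s\<in>UNIV. ennreal (wtGP_at N a c1 c2 (path_of h) j l1 (l2(j := s))))"
    unfolding wtGP_eq_off_at[where j=j] off using nonneg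
    by (simp add: ennreal_mult infsum_cmult_right_ennreal)
qed

lemma wtP_adds_box:
  assumes box: "adds_box N h' h j"
  shows "(\<Sum>\<^sub>\<infinity>x\<in>UNIV. pmf_int (Geom (qpar N a c1 c2 (path_of h j))) (l' j - neighbour_max N j (l'(j := x))) *
            wtP N a c1 c2 (path_of h') (l'(j := x)))
       = wtP N a c1 c2 (path_of h) l'"
proof -
  have j: "j \<le> N" using box unfolding adds_box_def by auto
  let ?g = "pmf_int (Geom (qpar N a c1 c2 (path_of h j))) (l' j - neighbour_max N j l')"
  let ?Z0 = "{l \<in> Zvec N. l j = 0}" and ?off = "\<lambda>l0. ennreal (wtGP_off N a c1 c2 (path_of h) j l' l0)"
  have cZ0: "countable ?Z0" by (rule countable_subset[OF _ countable_Zvec]) auto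
  have "(\<Sum>\<^sub>\<infinity>x\<in>UNIV. pmf_int (Geom (qpar N a c1 c2 (path_of h j))) (l' j - neighbour_max N j (l'(j := x))) *
            wtP N a c1 c2 (path_of h') (l'(j := x)))
      = ?g * (\<Sum>\<^sub>\<infinity>x\<in>UNIV. wtP N a c1 c2 (path_of h') (l'(j := x)))"
    using N by (simp add: neighbour_max_upd infsum_cmult_right_ennreal)
  also have "(\<Sum>\<^sub>\<infinity>x\<in>UNIV. wtP N a c1 c2 (path_of h') (l'(j := x)))
      = (\<Sum>\<^sub>\<infinity>x\<in>UNIV. \<Sum>\<^sub>\<infinity>l0\<in>?Z0. \<Sum>\<^sub>\<infinity>s\<in>UNIV. ennreal (wtGP N a c1 c2 (path_of h') (l'(j := x)) (l0(j := s))))"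
    unfolding wtP_def infsum_Zvec_split[OF j] ..
  also have "\<dots> = (\<Sum>\<^sub>\<infinity>l0\<in>?Z0. \<Sum>\<^sub>\<infinity>x\<in>UNIV. \<Sum>\<^sub>\<infinity>s\<in>UNIV. ennreal (wtGP N a c1 c2 (path_of h') (l'(j := x)) (l0(j := s))))"
    by (rule infsum_swap_ennreal[OF _ cZ0]) simp
  also have "\<dots> = (\<Sum>\<^sub>\<infinity>l0\<in>?Z0. \<Sum>\<^sub>\<infinity>s\<in>UNIV. \<Sum>\<^sub>\<infinity>x\<in>UNIV. ennreal (wtGP N a c1 c2 (path_of h') (l'(j := x)) (l0(j := s))))"
    by (intro infsum_cong infsum_swap_ennreal) simp_all
  also have "\<dots> = (\<Sum>\<^sub>\<infinity>l0\<in>?Z0. ?off l0 *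
      (\<Sum>\<^sub>\<infinity>s\<in>UNIV. \<Sum>\<^sub>\<infinity>x\<in>UNIV. ennreal (wtGP_at N a c1 c2 (path_of h') j (l'(j := x)) (l0(j := s)))))"
    unfolding infsum_wtGP_factor_at(1)[OF box] ..
  also have "?g * \<dots> = (\<Sum>\<^sub>\<infinity>l0\<in>?Z0. ?off l0 *
      (?g * (\<Sum>\<^sub>\<infinity>s\<in>UNIV. \<Sum>\<^sub>\<infinity>x\<in>UNIV. ennreal (wtGP_at N a c1 c2 (path_of h') j (l'(j := x)) (l0(j := s))))))"
    by (subst infsum_cmult_right_ennreal[OF cZ0, symmetric]) (simp add: mult_ac)
  also have "\<dots> = (\<Sum>\<^sub>\<infinity>l0\<in>?Z0. ?off l0 * (\<Sum>\<^sub>\<infinity>s\<in>UNIV. ennreal (wtGP_at N a c1 c2 (path_of h) j l' (l0(j := s)))))"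
    unfolding local_identity[OF box] ..
  also have "\<dots> = wtP N a c1 c2 (path_of h) l'"
    unfolding wtP_def infsum_Zvec_split[OF j] infsum_wtGP_factor_at(2)[OF box] ..
  finally show ?thesis .
qed

end

section \<open>Last passage values along a moving path\<close>

definition lpp_along :: "nat \<Rightarrow> (nat \<Rightarrow> vertex) \<Rightarrow> (nat \<Rightarrow> int) \<Rightarrow> (nat \<Rightarrow> int) \<Rightarrow> (vertex \<Rightarrow> nat) \<Rightarrow> nat \<Rightarrow> int" where
  "lpp_along N P h lam w = (\<lambda>i. if i \<le> N then lpp N P lam w (path_of h i) else 0)"

definition lpp_defined :: "nat \<Rightarrow> (nat \<Rightarrow> vertex) \<Rightarrow> (nat \<Rightarrow> int) \<Rightarrow> bool" where
  "lpp_defined N P h \<longleftrightarrow> (\<forall>lam w i. i \<le> N \<longrightarrow> passage_values N P lam w (path_of h i) \<noteq> {})"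

text \<open>The vertices \<open>(k + i, k)\<close> with \<open>k > h i\<close> are those strictly above the path \<open>path_of h\<close>.\<close>

definition lpp_ignores_above :: "nat \<Rightarrow> (nat \<Rightarrow> vertex) \<Rightarrow> (nat \<Rightarrow> int) \<Rightarrow> bool" where
  "lpp_ignores_above N P h \<longleftrightarrow>
     (\<forall>lam w i k t. i \<le> N \<longrightarrow> h i < k \<longrightarrow> lpp_along N P h lam (w((k + int i, k) := t)) = lpp_along N P h lam w)"

lemma passage_values_left_of_pushed:
  assumes box: "adds_box N h' h j"
  shows "passage_values N P lam w (fst (path_of h j) - 1, snd (path_of h j)) =
           (if j = 0 then {} else passage_values N P lam w (path_of h' (j - 1)))"
proof (cases "j = 0")
  case True
  then have "\<not> in_strip N (fst (path_of h j) - 1, snd (path_of h j))"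
    using box by (simp add: adds_box_def in_strip_def path_of_def)
  then show ?thesis using True by (simp add: passage_values_outside_strip)
next
  case False
  then have "h' (j - 1) = h' j + 1" "h j = h' j + 1" using box unfolding adds_box_def by (cases "j = N"; auto)+
  then have "(fst (path_of h j) - 1, snd (path_of h j)) = path_of h' (j - 1)"
    using False by (simp add: path_of_def of_nat_diff)
  then show ?thesis using False by simp
qed

lemma passage_values_below_pushed:
  assumes box: "adds_box N h' h j"
  shows "passage_values N P lam w (fst (path_of h j), snd (path_of h j) - 1) =
           (if j = N then {} else passage_values N P lam w (path_of h' (Suc j)))"
proof (cases "j = N")
  case True
  then have "\<not> in_strip N (fst (path_of h j), snd (path_of h j) - 1)"
    using box by (simp add: adds_box_def in_strip_def path_of_def)
  then show ?thesis using True by (simp add: passage_values_outside_strip)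
next
  case False
  then have "h' (Suc j) = h' j" "h j = h' j + 1" using box unfolding adds_box_def by (cases "j = 0"; auto)+
  then have "(fst (path_of h j), snd (path_of h j) - 1) = path_of h' (Suc j)" by (simp add: path_of_def)
  then show ?thesis using False by simp
qed

lemma pushed_vertex_off_path:
  assumes P: "down_right N P" and below: "\<And>i. i \<le> N \<Longrightarrow> snd (P i) \<le> h' i" and box: "adds_box N h' h j"
  shows "in_strip N (path_of h j)" "path_of h j \<notin> P ` {..N}"
proof -
  have j: "j \<le> N" and hj: "h j = h' j + 1" using box unfolding adds_box_def by auto
  have "0 \<le> snd (P j)" using down_right_in_strip[OF P j] unfolding in_strip_def by simp
  then show "in_strip N (path_of h j)" using below[OF j] hj j unfolding in_strip_def path_of_def by simp
  show "path_of h j \<notin> P ` {..N}"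
  proof
    assume "path_of h j \<in> P ` {..N}"
    then obtain k where "k \<le> N" "path_of (\<lambda>i. snd (P i)) k = path_of h j"
      using down_right_eq_path_of[OF P] by force
    then show False using below[OF j] hj path_of_inj by (fastforce simp: path_of_def)
  qed
qed

lemma lpp_pushed_vertex:
  assumes N: "1 \<le> N" and P: "down_right N P" and below: "\<And>i. i \<le> N \<Longrightarrow> snd (P i) \<le> h' i"
    and box: "adds_box N h' h j" and def: "lpp_defined N P h'"
  shows "passage_values N P lam w (path_of h j) \<noteq> {}"
    and "lpp N P lam w (path_of h j) = neighbour_max N j (lpp_along N P h' lam w) + int (w (path_of h j))"
proof -
  let ?v = "path_of h j" and ?S = "\<lambda>i. passage_values N P lam w (path_of h' i)"
  let ?A = "passage_values N P lam w (fst ?v - 1, snd ?v)" and ?B = "passage_values N P lam w (fst ?v, snd ?v - 1)"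
  have S: "?S i \<noteq> {}" "finite (?S i)" if "i \<le> N" for i
    using def that finite_passage_values[OF P] unfolding lpp_defined_def by auto
  note A = passage_values_left_of_pushed[OF box] and B = passage_values_below_pushed[OF box]
  have "?A \<union> ?B \<noteq> {} \<and> Max (?A \<union> ?B) = neighbour_max N j (lpp_along N P h' lam w)"
  proof -
    have "j \<le> N" using box unfolding adds_box_def by auto
    then consider "j = 0" | "j = N" | "0 < j \<and> j < N" by linarith
    then show ?thesis
    proof cases
      case 1
      then show ?thesis unfolding A B using N S[of 1] by (simp add: neighbour_max_def lpp_along_def lpp_eq_Max)
    next
      case 2
      then show ?thesis unfolding A B using N S[of "N - 1"] by (simp add: neighbour_max_def lpp_along_def lpp_eq_Max)
    next
      case 3
      then have "j - 1 \<le> N" "Suc j \<le> N" "j \<noteq> 0" "j \<noteq> N" by auto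
      then show ?thesis unfolding A B using S[of "j - 1"] S[of "Suc j"]
        by (simp add: Max_Un neighbour_max_def lpp_along_def lpp_eq_Max)
    qed
  qed
  then show "passage_values N P lam w ?v \<noteq> {}"
    and "lpp N P lam w ?v = neighbour_max N j (lpp_along N P h' lam w) + int (w ?v)"
    using passage_values_step[OF pushed_vertex_off_path[OF P below box]]
      lpp_step[OF P pushed_vertex_off_path[OF P below box]] by auto
qed

lemma lpp_along_adds_box:
  assumes "1 \<le> N" "down_right N P" "\<And>i. i \<le> N \<Longrightarrow> snd (P i) \<le> h' i"
    and box: "adds_box N h' h j" and "lpp_defined N P h'"
  shows "lpp_along N P h lam w =
           (lpp_along N P h' lam w)(j := neighbour_max N j (lpp_along N P h' lam w) + int (w (path_of h j)))"
proof -
  have "j \<le> N" "\<And>i. i \<noteq> j \<Longrightarrow> path_of h i = path_of h' i"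
    using box unfolding adds_box_def path_of_def by auto
  then show ?thesis
    using lpp_pushed_vertex(2)[OF assms] unfolding lpp_along_def by (auto simp: fun_eq_iff)
qed

lemma lpp_defined_adds_box:
  assumes "1 \<le> N" "down_right N P" "\<And>i. i \<le> N \<Longrightarrow> snd (P i) \<le> h' i"
    and box: "adds_box N h' h j" and def: "lpp_defined N P h'"
  shows "lpp_defined N P h"
proof -
  have "\<And>i. i \<noteq> j \<Longrightarrow> path_of h i = path_of h' i"
    using box unfolding adds_box_def path_of_def by auto
  then show ?thesis
    using def lpp_pushed_vertex(1)[OF assms] unfolding lpp_defined_def by metis
qed

lemma lpp_ignores_above_adds_box:
  assumes "1 \<le> N" "down_right N P" "\<And>i. i \<le> N \<Longrightarrow> snd (P i) \<le> h' i"
    and box: "adds_box N h' h j" and "lpp_defined N P h'" and ign: "lpp_ignores_above N P h'"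
  shows "lpp_ignores_above N P h"
  unfolding lpp_ignores_above_def
proof (intro allI impI)
  fix lam w i k t assume i: "i \<le> N" and k: "h i < k"
  have hj: "h = h'(j := h' j + 1)" using box unfolding adds_box_def by auto
  then have "h' i < k" using k by (cases "i = j") auto
  then have "lpp_along N P h' lam (w((k + int i, k) := t)) = lpp_along N P h' lam w"
    using ign i unfolding lpp_ignores_above_def by blast
  moreover have "path_of h j \<noteq> (k + int i, k)" using k hj by (auto simp: path_of_def)
  ultimately show "lpp_along N P h lam (w((k + int i, k) := t)) = lpp_along N P h lam w"
    using lpp_along_adds_box[OF assms(1-5), of lam "w((k + int i, k) := t)"]
      lpp_along_adds_box[OF assms(1-5), of lam w] by simp
qed

section \<open>From one path to a path above it\<close>

lemma adds_box_lower_corner: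
  assumes N: "1 \<le> N" and h: "admissible N h" and j: "j \<le> N" "0 < h j"
    and left: "0 < j \<Longrightarrow> h (j - 1) = h j" and right: "j < N \<Longrightarrow> h (Suc j) = h j - 1"
  shows "adds_box N (h(j := h j - 1)) h j \<and> admissible N (h(j := h j - 1))"
proof
  show "adds_box N (h(j := h j - 1)) h j"
    unfolding adds_box_def using N j left right by (auto simp: fun_eq_iff)
  let ?h' = "h(j := h j - 1)"
  have "?h' i = ?h' (i - 1) \<or> ?h' i = ?h' (i - 1) - 1" if "i \<in> {1..N}" for i
  proof -
    consider "i = j" | "i = Suc j" | "i \<noteq> j" "i - 1 \<noteq> j" using that by fastforce
    then show ?thesis using that left right admissible_step[OF h that] by cases auto
  qed
  then show "admissible N ?h'"
    using h j unfolding admissible_def by auto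
qed

text \<open>Among the vertices strictly above \<open>hP\<close>, one maximising \<open>2 h i + i\<close> is a corner of \<open>h\<close>:
  the path enters it horizontally and leaves it downwards.\<close>

lemma exists_lower_corner:
  assumes hP: "admissible N hP" and h: "admissible N h" and ex: "\<exists>i\<le>N. hP i < h i"
  obtains j where "j \<le> N" "hP j < h j" "0 < j \<Longrightarrow> h (j - 1) = h j" "j < N \<Longrightarrow> h (Suc j) = h j - 1"
proof -
  let ?S = "{i. i \<le> N \<and> hP i < h i}" and ?f = "\<lambda>i. 2 * h i + int i"
  obtain j where "j \<in> ?S" and jmax: "\<And>i. i \<in> ?S \<Longrightarrow> ?f i \<le> ?f j"
  proof -
    have fin: "finite ?S" "?S \<noteq> {}" using ex by auto
    then have "Max (?f ` ?S) \<in> ?f ` ?S" by (intro Max_in) auto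
    then obtain j where "j \<in> ?S" "?f j = Max (?f ` ?S)" by auto
    moreover have "\<And>i. i \<in> ?S \<Longrightarrow> ?f i \<le> Max (?f ` ?S)" using fin by auto
    ultimately show ?thesis using that by metis
  qed
  then have j: "j \<le> N" "hP j < h j" by auto
  have "h (j - 1) = h j" if "0 < j"
  proof (rule ccontr)
    assume "h (j - 1) \<noteq> h j"
    then have "h (j - 1) = h j + 1" using admissible_step[OF h, of j] that j by auto
    moreover have "hP j = hP (j - 1) \<or> hP j = hP (j - 1) - 1" using admissible_step[OF hP, of j] that j by auto
    ultimately have "hP (j - 1) < h (j - 1)" using j by linarith
    then have "j - 1 \<in> ?S" using j by simp
    then have "?f (j - 1) \<le> ?f j" by (rule jmax)
    then show False using \<open>h (j - 1) = h j + 1\<close> that by (simp add: of_nat_diff)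
  qed
  moreover have "h (Suc j) = h j - 1" if "j < N"
  proof (rule ccontr)
    assume "h (Suc j) \<noteq> h j - 1"
    then have "h (Suc j) = h j" using admissible_step[OF h, of "Suc j"] that by auto
    moreover have "hP (Suc j) = hP j \<or> hP (Suc j) = hP j - 1" using admissible_step[OF hP, of "Suc j"] that by auto
    ultimately have "hP (Suc j) < h (Suc j)" using j by linarith
    then have "Suc j \<in> ?S" using that by simp
    then have "?f (Suc j) \<le> ?f j" by (rule jmax)
    then show False using \<open>h (Suc j) = h j\<close> by simp
  qed
  ultimately show ?thesis using that j by blast
qed

lemma region_finite: "finite (region N Q)"
proof -
  define B where "B = Max ((\<lambda>j. fst (Q j)) ` {..N})"
  have "region N Q \<subseteq> {0..B} \<times> {0..B}"
  proof
    fix v assume "v \<in> region N Q"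
    then obtain j where v: "in_strip N v" "j \<le> N" "fst v \<le> fst (Q j)" "snd v \<le> snd (Q j)"
      unfolding region_def by auto
    have "fst (Q j) \<le> B" unfolding B_def using v(2) by (intro Max_ge) auto
    then show "v \<in> {0..B} \<times> {0..B}" using v unfolding in_strip_def by (cases v) auto
  qed
  then show ?thesis by (rule finite_subset) simp
qed

context lpp_strip
begin

definition transition :: "(nat \<Rightarrow> vertex) \<Rightarrow> (nat \<Rightarrow> vertex) \<Rightarrow> (nat \<Rightarrow> int) \<Rightarrow> (nat \<Rightarrow> int) \<Rightarrow> (nat \<Rightarrow> int) \<Rightarrow> ennreal" where
  "transition P Q h l' l = emeasure (measure_pmf (weights N a c1 c2 Q)) {w. lpp_along N P h l w = l'}"

definition transports :: "(nat \<Rightarrow> vertex) \<Rightarrow> (nat \<Rightarrow> vertex) \<Rightarrow> (nat \<Rightarrow> int) \<Rightarrow> bool" where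
  "transports P Q h \<longleftrightarrow>
     (\<forall>l'\<in>Zvec N. (\<Sum>\<^sub>\<infinity>l\<in>Zvec N. transition P Q h l' l * wtP N a c1 c2 P l) = wtP N a c1 c2 (path_of h) l')"

lemma transition_adds_box:
  assumes P: "down_right N P" and Q: "down_right N Q"
    and below: "\<And>i. i \<le> N \<Longrightarrow> snd (P i) \<le> h' i" and above: "\<And>i. i \<le> N \<Longrightarrow> h i \<le> snd (Q i)"
    and box: "adds_box N h' h j" and def: "lpp_defined N P h'" and ign: "lpp_ignores_above N P h'"
  shows "transition P Q h l' l =
    (\<Sum>\<^sub>\<infinity>x\<in>UNIV. transition P Q h' (l'(j := x)) l * pmf_int (Geom (qpar N a c1 c2 (path_of h j))) (l' j - neighbour_max N j (l'(j := x))))"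
proof -
  have j: "j \<le> N" and hj: "h = h'(j := h' j + 1)" using box unfolding adds_box_def by auto
  have "path_of h j = (h' j + 1 + int j, h' j + 1)" using hj by (simp add: path_of_def)
  then have indep: "lpp_along N P h' l (w(path_of h j := t)) = lpp_along N P h' l w" for w t
    using ign j unfolding lpp_ignores_above_def by simp
  have "0 \<le> h j" using below[OF j] hj down_right_in_strip[OF P j] by (simp add: in_strip_def)
  moreover have "fst (Q j) = snd (Q j) + int j"
    using down_right_eq_path_of[OF Q j] unfolding path_of_def by (metis fst_conv)
  ultimately have "path_of h j \<in> region N Q"
    using above[OF j] j unfolding region_def in_strip_def path_of_def by auto
  from emeasure_Pi_pmf_add_coordinate[OF region_finite this indep] show ?thesis
    unfolding transition_def weights_def by (simp only: lpp_along_adds_box[OF N P below box def])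
qed

lemma transports_adds_box:
  assumes P: "down_right N P" and Q: "down_right N Q"
    and below: "\<And>i. i \<le> N \<Longrightarrow> snd (P i) \<le> h' i" and above: "\<And>i. i \<le> N \<Longrightarrow> h i \<le> snd (Q i)"
    and box: "adds_box N h' h j" and def: "lpp_defined N P h'" and ign: "lpp_ignores_above N P h'"
    and IH: "transports P Q h'"
  shows "transports P Q h"
  unfolding transports_def
proof
  fix l' assume l': "l' \<in> Zvec N"
  have j: "j \<le> N" using box unfolding adds_box_def by auto
  let ?g = "\<lambda>x. pmf_int (Geom (qpar N a c1 c2 (path_of h j))) (l' j - neighbour_max N j (l'(j := x)))"
  have "(\<Sum>\<^sub>\<infinity>l\<in>Zvec N. transition P Q h l' l * wtP N a c1 c2 P l)
      = (\<Sum>\<^sub>\<infinity>l\<in>Zvec N. \<Sum>\<^sub>\<infinity>x\<in>UNIV. transition P Q h' (l'(j := x)) l * ?g x * wtP N a c1 c2 P l)"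
    by (simp only: transition_adds_box[OF assms(1-7)]) (simp add: infsum_cmult_left_ennreal)
  also have "\<dots> = (\<Sum>\<^sub>\<infinity>x\<in>UNIV. ?g x * (\<Sum>\<^sub>\<infinity>l\<in>Zvec N. transition P Q h' (l'(j := x)) l * wtP N a c1 c2 P l))"
    by (subst infsum_swap_ennreal[OF countable_Zvec])
       (simp_all add: mult_ac infsum_cmult_right_ennreal[OF countable_Zvec, symmetric])
  also have "\<dots> = (\<Sum>\<^sub>\<infinity>x\<in>UNIV. ?g x * wtP N a c1 c2 (path_of h') (l'(j := x)))"
  proof (rule infsum_cong)
    fix x
    have "l'(j := x) \<in> Zvec N" using l' j by (auto simp: Zvec_def)
    then show "?g x * (\<Sum>\<^sub>\<infinity>l\<in>Zvec N. transition P Q h' (l'(j := x)) l * wtP N a c1 c2 P l) =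
               ?g x * wtP N a c1 c2 (path_of h') (l'(j := x))"
      using IH unfolding transports_def by simp
  qed
  also have "\<dots> = wtP N a c1 c2 (path_of h) l'" by (rule wtP_adds_box[OF box])
  finally show "(\<Sum>\<^sub>\<infinity>l\<in>Zvec N. transition P Q h l' l * wtP N a c1 c2 P l) = wtP N a c1 c2 (path_of h) l'" .
qed

lemma transport_start:
  assumes P: "down_right N P" and h: "\<And>i. i \<le> N \<Longrightarrow> h i = snd (P i)"
  shows "lpp_defined N P h" "lpp_ignores_above N P h" "transports P Q h"
proof -
  have path: "path_of h i = P i" if "i \<le> N" for i
    using down_right_eq_path_of[OF P that] h[OF that] by (simp add: path_of_def)
  have single: "passage_values N P l w (path_of h i) = {l i}" if "i \<le> N" for l w i
    unfolding path[OF that] by (rule passage_values_on_path[OF P that])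
  then have along: "lpp_along N P h l w = (\<lambda>i. if i \<le> N then l i else 0)" for l w
    unfolding lpp_along_def by (auto simp: lpp_eq_Max)
  show "lpp_defined N P h" "lpp_ignores_above N P h"
    unfolding lpp_defined_def lpp_ignores_above_def using single along by auto
  have "transition P Q h l' l = (if l = l' then 1 else 0)" if "l \<in> Zvec N" for l l'
  proof -
    have "(\<lambda>i. if i \<le> N then l i else 0) = l" using that unfolding Zvec_def by (auto simp: fun_eq_iff)
    then show ?thesis
      unfolding transition_def along by (simp add: measure_pmf.emeasure_space_1)
  qed
  then have "(\<Sum>\<^sub>\<infinity>l\<in>Zvec N. transition P Q h l' l * wtP N a c1 c2 P l) = wtP N a c1 c2 P l'"
    if "l' \<in> Zvec N" for l'
    using that by (subst infsum_eq_single[of l']) auto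
  then show "transports P Q h"
    unfolding transports_def using wtP_cong_path[of N P "path_of h"] path by simp
qed

lemma transport_between:
  assumes P: "down_right N P" and Q: "down_right N Q"
    and "admissible N h" and "\<And>i. i \<le> N \<Longrightarrow> snd (P i) \<le> h i \<and> h i \<le> snd (Q i)"
  shows "lpp_defined N P h \<and> lpp_ignores_above N P h \<and> transports P Q h"
  using assms(3,4)
proof (induction "\<Sum>i\<le>N. nat (h i - snd (P i))" arbitrary: h rule: less_induct)
  case less
  note hP = admissible_heights[OF P]
  show ?case
  proof (cases "\<exists>i\<le>N. snd (P i) < h i")
    case False
    then have "\<And>i. i \<le> N \<Longrightarrow> h i = snd (P i)" using less.prems(2) by force
    then show ?thesis using transport_start[OF P] by blast
  next
    case True
    obtain j where j: "j \<le> N" "snd (P j) < h j"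
      and corner: "0 < j \<Longrightarrow> h (j - 1) = h j" "j < N \<Longrightarrow> h (Suc j) = h j - 1"
      using exists_lower_corner[OF hP less.prems(1) True] by blast
    define h' where "h' = h(j := h j - 1)"
    have "0 < h j" using j admissible_nonneg[OF hP j(1)] by linarith
    then have box: "adds_box N h' h j" and h': "admissible N h'"
      using adds_box_lower_corner[OF N less.prems(1) j(1) _ corner] unfolding h'_def by auto
    have between: "\<And>i. i \<le> N \<Longrightarrow> snd (P i) \<le> h' i \<and> h' i \<le> snd (Q i)"
      using less.prems(2) j unfolding h'_def by force
    have "(\<Sum>i\<le>N. nat (h' i - snd (P i))) < (\<Sum>i\<le>N. nat (h i - snd (P i)))"
      unfolding h'_def using j less.prems(2) by (intro sum_strict_mono_ex1) auto
    then have "lpp_defined N P h' \<and> lpp_ignores_above N P h' \<and> transports P Q h'"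
      using less.hyps h' between by blast
    then show ?thesis
      using lpp_defined_adds_box[OF N P _ box] lpp_ignores_above_adds_box[OF N P _ box]
        transports_adds_box[OF P Q _ _ box] between less.prems(2) by blast
  qed
qed

lemma U_eq_transition:
  assumes Q: "down_right N Q" and l': "l' \<in> Zvec N"
  shows "ennreal (U N a c1 c2 P Q l' l) = transition P Q (\<lambda>i. snd (Q i)) l' l"
proof -
  have "{w. \<forall>j\<le>N. lpp N P l w (Q j) = l' j} = {w. lpp_along N P (\<lambda>i. snd (Q i)) l w = l'}"
    using l' down_right_eq_path_of[OF Q] unfolding lpp_along_def Zvec_def by (auto simp: fun_eq_iff)
  then show ?thesis unfolding U_def transition_def by (simp add: measure_pmf.emeasure_eq_measure)
qed

lemma transport_to_path_above:
  assumes P: "down_right N P" and Q: "down_right N Q" and PQ: "path_above N P Q"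
  shows "lpp_defined N P (\<lambda>i. snd (Q i))" "transports P Q (\<lambda>i. snd (Q i))"
  using transport_between[OF P Q admissible_heights[OF Q]] path_above_heights[OF P Q PQ] by blast+

theorem wtP_invariant:
  assumes P: "down_right N P" and Q: "down_right N Q" and PQ: "path_above N P Q" and l': "l' \<in> Zvec N"
  shows "(\<Sum>\<^sub>\<infinity>l\<in>Zvec N. ennreal (U N a c1 c2 P Q l' l) * wtP N a c1 c2 P l) = wtP N a c1 c2 Q l'"
proof -
  have "(\<Sum>\<^sub>\<infinity>l\<in>Zvec N. ennreal (U N a c1 c2 P Q l' l) * wtP N a c1 c2 P l) =
             wtP N a c1 c2 (path_of (\<lambda>i. snd (Q i))) l'"
    using transport_to_path_above(2)[OF P Q PQ] l' unfolding transports_def U_eq_transition[OF Q l'] by blast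
  also have "\<dots> = wtP N a c1 c2 Q l'"
    using down_right_eq_path_of[OF Q] by (metis wtP_cong_path)
  finally show ?thesis .
qed

end

section \<open>Invariance under a common shift\<close>

definition shift_vec :: "nat \<Rightarrow> (nat \<Rightarrow> int) \<Rightarrow> int \<Rightarrow> nat \<Rightarrow> int" where
  "shift_vec N L x = (\<lambda>j. if j \<le> N then L j + x else 0)"

lemma bij_betw_shift_vec: "bij_betw (\<lambda>(L, x). shift_vec N L x) (Lvec N \<times> UNIV) (Zvec N)"
  by (rule bij_betwI[where g="\<lambda>l. (shift_vec N l (- l 0), l 0)"])
     (auto simp: shift_vec_def Lvec_def Zvec_def fun_eq_iff)

lemma countable_Lvec: "countable (Lvec N)"
  by (rule countable_subset[OF _ countable_Zvec]) (auto simp: Lvec_def Zvec_def)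

lemma infsum_Zvec_eq_Lvec:
  fixes g :: "(nat \<Rightarrow> int) \<Rightarrow> ennreal"
  shows "(\<Sum>\<^sub>\<infinity>l\<in>Zvec N. g l) = (\<Sum>\<^sub>\<infinity>L\<in>Lvec N. \<Sum>\<^sub>\<infinity>x\<in>UNIV. g (shift_vec N L x))"
  using infsum_reindex_bij_betw[OF bij_betw_shift_vec, of g]
  by (simp add: infsum_Sigma_ennreal[OF countable_Lvec] case_prod_beta)

lemma wtP_shift:
  assumes "\<And>i. i \<le> N \<Longrightarrow> l1 i = l1' i + c"
  shows "wtP N a c1 c2 P l1 = wtP N a c1 c2 P l1'"
proof -
  have bij: "bij_betw (\<lambda>l. shift_vec N l c) (Zvec N) (Zvec N)"
    by (rule bij_betwI[where g="\<lambda>l. shift_vec N l (- c)"]) (auto simp: shift_vec_def Zvec_def fun_eq_iff)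
  have "wtGP N a c1 c2 P l1 (shift_vec N l2 c) = wtGP N a c1 c2 P l1' l2" for l2
    by (rule wtGP_shift) (use assms in \<open>auto simp: shift_vec_def\<close>)
  then show ?thesis
    unfolding wtP_def using infsum_reindex_bij_betw[OF bij, of "\<lambda>l2. ennreal (wtGP N a c1 c2 P l1 l2)"] by simp
qed

lemma U_shift:
  assumes P: "down_right N P" and Q: "down_right N Q" and def: "lpp_defined N P (\<lambda>i. snd (Q i))"
    and shift': "\<And>i. i \<le> N \<Longrightarrow> l1' i = l' i + c" and shift: "\<And>i. i \<le> N \<Longrightarrow> l1 i = l i + c"
  shows "U N a c1 c2 P Q l1' l1 = U N a c1 c2 P Q l' l"
proof -
  have "passage_values N P l w (Q j) \<noteq> {}" if "j \<le> N" for w j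
    using def that down_right_eq_path_of[OF Q that] unfolding lpp_defined_def by metis
  then have "lpp N P l1 w (Q j) = lpp N P l w (Q j) + c" if "j \<le> N" for w j
    using lpp_shift[of N P l1 l c w "Q j", OF P shift] that by blast
  then have "{w. \<forall>j\<le>N. lpp N P l1 w (Q j) = l1' j} = {w. \<forall>j\<le>N. lpp N P l w (Q j) = l' j}"
    using shift' by auto
  then show ?thesis unfolding U_def by simp
qed

lemma U_sum_eq_1: "(\<Sum>\<^sub>\<infinity>l'\<in>Zvec N. ennreal (U N a c1 c2 P Q l' l)) = 1"
proof -
  let ?M = "measure_pmf (weights N a c1 c2 Q)"
  let ?G = "\<lambda>w. (\<lambda>i. if i \<le> N then lpp N P l w (Q i) else 0) :: nat \<Rightarrow> int"
  have "ennreal (U N a c1 c2 P Q l' l) = (\<integral>\<^sup>+w. indicator {w. ?G w = l'} w \<partial>?M)" if "l' \<in> Zvec N" for l'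
  proof -
    have "{w. \<forall>j\<le>N. lpp N P l w (Q j) = l' j} = {w. ?G w = l'}"
      using that unfolding Zvec_def by (auto simp: fun_eq_iff)
    then show ?thesis unfolding U_def by (simp add: measure_pmf.emeasure_eq_measure)
  qed
  then have "(\<Sum>\<^sub>\<infinity>l'\<in>Zvec N. ennreal (U N a c1 c2 P Q l' l)) =
             (\<integral>\<^sup>+w. (\<Sum>\<^sub>\<infinity>l'\<in>Zvec N. indicator {w. ?G w = l'} w) \<partial>?M)"
    by (simp add: nn_integral_infsum_swap[OF countable_Zvec] cong: infsum_cong)
  also have "\<dots> = (\<integral>\<^sup>+w. 1 \<partial>?M)"
  proof (rule nn_integral_cong)
    fix w
    have "?G w \<in> Zvec N" by (simp add: Zvec_def)
    then show "(\<Sum>\<^sub>\<infinity>l'\<in>Zvec N. indicator {w. ?G w = l'} w) = (1 :: ennreal)"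
      by (subst infsum_eq_single[of "?G w"]) auto
  qed
  finally show ?thesis by (simp add: measure_pmf.emeasure_space_1)
qed

context lpp_strip
begin

lemma wtP_Ub_invariant:
  assumes P: "down_right N P" and Q: "down_right N Q" and PQ: "path_above N P Q" and L': "L' \<in> Lvec N"
  shows "(\<Sum>\<^sub>\<infinity>L\<in>Lvec N. Ub N a c1 c2 P Q L' L * wtP N a c1 c2 P L) = wtP N a c1 c2 Q L'"
proof -
  let ?f = "\<lambda>l. ennreal (U N a c1 c2 P Q L' l) * wtP N a c1 c2 P l"
  have "ennreal (U N a c1 c2 P Q (shift_vec N L' x) L) * wtP N a c1 c2 P L = ?f (shift_vec N L (- x))"
    if "L \<in> Lvec N" for L x
    using U_shift[OF P Q transport_to_path_above(1)[OF P Q PQ], of "shift_vec N L' x" L' x L "shift_vec N L (- x)"]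
      wtP_shift[of N L "shift_vec N L (- x)" x]
    by (simp add: shift_vec_def)
  then have "(\<Sum>\<^sub>\<infinity>L\<in>Lvec N. Ub N a c1 c2 P Q L' L * wtP N a c1 c2 P L)
      = (\<Sum>\<^sub>\<infinity>L\<in>Lvec N. \<Sum>\<^sub>\<infinity>x\<in>UNIV. ?f (shift_vec N L (- x)))"
    unfolding Ub_def shift_vec_def[symmetric]
    by (intro infsum_cong) (simp add: infsum_cmult_left_ennreal[symmetric])
  also have "\<dots> = (\<Sum>\<^sub>\<infinity>l\<in>Zvec N. ?f l)"
    unfolding infsum_Zvec_eq_Lvec
    by (rule infsum_cong) (rule infsum_int_uminus_ennreal[of "\<lambda>x. ?f (shift_vec N _ x)"])
  also have "\<dots> = wtP N a c1 c2 Q L'"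
    using wtP_invariant[OF P Q PQ] L' by (auto simp: Lvec_def Zvec_def)
  finally show ?thesis .
qed

lemma Ub_sum_eq_1: "(\<Sum>\<^sub>\<infinity>L'\<in>Lvec N. Ub N a c1 c2 P Q L' L) = 1"
  using U_sum_eq_1[of N a c1 c2 P Q L] unfolding Ub_def infsum_Zvec_eq_Lvec shift_vec_def .

lemma Zc_invariant:
  assumes P: "down_right N P" and Q: "down_right N Q" and PQ: "path_above N P Q"
  shows "Zc N a c1 c2 Q = Zc N a c1 c2 P"
proof -
  have "Zc N a c1 c2 Q = (\<Sum>\<^sub>\<infinity>L'\<in>Lvec N. \<Sum>\<^sub>\<infinity>L\<in>Lvec N. Ub N a c1 c2 P Q L' L * wtP N a c1 c2 P L)"
    unfolding Zc_def by (rule infsum_cong) (simp add: wtP_Ub_invariant[OF P Q PQ])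
  also have "\<dots> = (\<Sum>\<^sub>\<infinity>L\<in>Lvec N. (\<Sum>\<^sub>\<infinity>L'\<in>Lvec N. Ub N a c1 c2 P Q L' L) * wtP N a c1 c2 P L)"
    by (simp add: infsum_swap_ennreal[OF countable_Lvec countable_Lvec] infsum_cmult_left_ennreal[OF countable_Lvec])
  finally show ?thesis unfolding Zc_def Ub_sum_eq_1 by simp
qed

theorem PP_invariant:
  assumes P: "down_right N P" and Q: "down_right N Q" and PQ: "path_above N P Q" and L': "L' \<in> Lvec N"
  shows "(\<Sum>\<^sub>\<infinity>L\<in>Lvec N. Ub N a c1 c2 P Q L' L * PP N a c1 c2 P L) = PP N a c1 c2 Q L'"
proof -
  have "(\<Sum>\<^sub>\<infinity>L\<in>Lvec N. Ub N a c1 c2 P Q L' L * PP N a c1 c2 P L)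
      = (\<Sum>\<^sub>\<infinity>L\<in>Lvec N. Ub N a c1 c2 P Q L' L * wtP N a c1 c2 P L) * inverse (Zc N a c1 c2 P)"
    unfolding PP_def divide_ennreal_def mult.assoc[symmetric]
    by (rule infsum_cmult_left_ennreal[OF countable_Lvec])
  then show ?thesis
    unfolding PP_def divide_ennreal_def wtP_Ub_invariant[OF P Q PQ L'] Zc_invariant[OF P Q PQ] .
qed

end

theorem theorem2p16:
  fixes N :: nat and a :: "int \<Rightarrow> real" and c1 c2 :: real
    and P Q :: "nat \<Rightarrow> int \<times> int"
  assumes "N \<ge> 1"
    and "\<And>j. a j > 0" and "\<And>j. a (j + int N) = a j"
    and "c1 > 0" and "c2 > 0"
    and "\<And>i j. a i * a j < 1" and "\<And>i. a i * c1 < 1" and "\<And>i. a i * c2 < 1"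
    and "down_right N P" and "down_right N Q" and "path_above N P Q"
  shows "(\<forall>l'\<in>Zvec N.
            (\<Sum>\<^sub>\<infinity>l\<in>Zvec N. ennreal (U N a c1 c2 P Q l' l) * wtP N a c1 c2 P l)
              = wtP N a c1 c2 Q l')
       \<and> (c1 * c2 < 1 \<longrightarrow>
           (\<forall>L'\<in>Lvec N.
              (\<Sum>\<^sub>\<infinity>L\<in>Lvec N. Ub N a c1 c2 P Q L' L * PP N a c1 c2 P L)
                = PP N a c1 c2 Q L'))"
proof -
  interpret lpp_strip N a c1 c2
    by unfold_locales (use assms(1-8) in auto)
  text \<open>The hypothesis \<open>c\<^sub>1 c\<^sub>2 < 1\<close> only makes the normalising constant finite; the identity
    for \<open>PP\<close> holds in \<open>[0, \<infinity>]\<close> without it.\<close>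
  show ?thesis
    using wtP_invariant[OF assms(9-11)] PP_invariant[OF assms(9-11)] by blast
qed

end
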